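(* Let $X^*\in\mathbb{S}^n_{++}$ satisfy $\sum_{j=1}^k m^j_{X^*}Y_j+\big(\sum_{j=1}^k o^j_{X^*}\big)X^*=0$, and let $\mathcal{K}\subset\mathbb{S}^n_{++}$ be a compact set with $X^*\in\mathcal{K}$. Then there exist constants $O,K>0$ such that for all $X\in\mathcal{K}$ and all integers $p\ge1$, $$\|T_p(X)-X\|\le\frac{K}{p}\|X-X^*\|+\frac{O}{p^2}.$$ In particular $\|T_p(X^* )-X^*\|\le O/p^2$ for all $p\ge1$.
   Context: $\mathbb{S}^n_{++}$ denotes the set of real symmetric positive definite $n\times n$ matrices and $\|\cdot\|$ the Frobenius norm. For $X,Y\in\mathbb{S}^n_{++}$ let $\alpha=\lambda_{\min}(YX^{-1})$, $\beta=\lambda_{\max}(YX^{-1})$. For $0<\alpha\le\beta$ and $t\in\mathbb{R}$ set $\varphi_{\alpha\beta}(t)=\frac{\beta^t-\alpha^t}{\beta-\alpha}$ and $\psi_{\alpha\beta}(t)=\frac{\beta\alpha^t-\alpha\beta^t}{\beta-\alpha}$ if $\beta>\alpha$, and $\varphi_{\alpha\beta}(t)=t\alpha^{t-1}$, $\psi_{\alpha\beta}(t)=(1-t)\alpha^t$ if $\beta=\alpha$. The Thompson geodesic is $X*_tY=\varphi_{\alpha\beta}(t)Y+\psi_{\alpha\beta}(t)X$. Fix $k\ge1$ and an ordered tuple $(Y_1,\dots,Y_k)$ in $\mathbb{S}^n_{++}$. For $i\in\mathbb{N}$ let $j(i)\in\{1,\dots,k\}$ with $j(i)\equiv i\pmod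 k$; $S_i(X)=X*_{\frac{1}{i+1}}Y_{j(i)}$, and for $p\in\mathbb{Z}_{\ge0}$, $T_p=S_{(p+1)k}\circ\cdots\circ S_{pk+1}$. For $1\le j\le k$ and $X\in\mathbb{S}^n_{++}$, with $\alpha=\lambda_{\min}(Y_jX^{-1})$, $\beta=\lambda_{\max}(Y_jX^{-1})$: $m^j_X=\frac{\log\beta-\log\alpha}{\beta-\alpha}$, $o^j_X=\frac{\beta\log\alpha-\alpha\log\beta}{\beta-\alpha}$ if $\beta>\alpha$, and $m^j_X=1/\alpha$, $o^j_X=\log\alpha-1$ if $\beta=\alpha$ (these are the $t$-derivatives at $t=0$ of $\varphi_{\alpha\beta}$ and $\psi_{\alpha\beta}$). *)

theory Defs
  imports "HOL-Analysis.Analysis"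
begin

type_synonym 'n mat = "real^'n^'n"

definition spd :: "'n::finite mat \<Rightarrow> bool" where
  "spd A \<longleftrightarrow> transpose A = A \<and> (\<forall>x::real^'n. x \<noteq> 0 \<longrightarrow> x \<bullet> (A *v x) > 0)"

definition eigenvalues :: "'n::finite mat \<Rightarrow> real set" where
  "eigenvalues M = {l. \<exists>v::real^'n. v \<noteq> 0 \<and> M *v v = l *\<^sub>R v}"

definition lam_min :: "'n::finite mat \<Rightarrow> real" where
  "lam_min M = Inf (eigenvalues M)"

definition lam_max :: "'n::finite mat \<Rightarrow> real" where
  "lam_max M = Sup (eigenvalues M)"

definition phi :: "real \<Rightarrow> real \<Rightarrow> real \<Rightarrow> real" where
  "phi a b t = (if b > a then (b powr t - a powr t) / (b - a) else t * a powr (t - 1))"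

definition psi :: "real \<Rightarrow> real \<Rightarrow> real \<Rightarrow> real" where
  "psi a b t = (if b > a then (b * a powr t - a * b powr t) / (b - a) else (1 - t) * a powr t)"

definition thompson_geo :: "'n::finite mat \<Rightarrow> real \<Rightarrow> 'n mat \<Rightarrow> 'n mat" where
  "thompson_geo X t Y =
     (let a = lam_min (Y ** matrix_inv X); b = lam_max (Y ** matrix_inv X)
      in phi a b t *\<^sub>R Y + psi a b t *\<^sub>R X)"

definition jidx :: "nat \<Rightarrow> nat \<Rightarrow> nat" where
  "jidx k i = (if i mod k = 0 then k else i mod k)"

definition S_map :: "(nat \<Rightarrow> 'n::finite mat) \<Rightarrow> nat \<Rightarrow> nat \<Rightarrow> 'n mat \<Rightarrow> 'n mat" where
  "S_map Y k i X = thompson_geo X (1 / (real i + 1)) (Y (jidx k i))"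

text \<open>T_p = S_{(p+1)k} o ... o S_{pk+1}  (S_{pk+1} applied first).\<close>
definition T_map :: "(nat \<Rightarrow> 'n::finite mat) \<Rightarrow> nat \<Rightarrow> nat \<Rightarrow> 'n mat \<Rightarrow> 'n mat" where
  "T_map Y k p X = fold (S_map Y k) [p * k + 1 ..< (p + 1) * k + 1] X"

definition m_coef :: "'n::finite mat \<Rightarrow> 'n mat \<Rightarrow> real" where
  "m_coef Yj X =
     (let a = lam_min (Yj ** matrix_inv X); b = lam_max (Yj ** matrix_inv X)
      in if b > a then (ln b - ln a) / (b - a) else 1 / a)"

definition o_coef :: "'n::finite mat \<Rightarrow> 'n mat \<Rightarrow> real" where
  "o_coef Yj X =
     (let a = lam_min (Yj ** matrix_inv X); b = lam_max (Yj ** matrix_inv X)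
      in if b > a then (b * ln a - a * ln b) / (b - a) else ln a - 1)"

end

theory Submission
  imports Defs
begin

text \<open>Write one step of the iteration as \<open>Z *\<^sub>t Y\<^sub>j = Z + t V\<^sub>j(Z) + O(t\<^sup>2)\<close>, where
  \<open>V\<^sub>j(Z) = m\<^sup>j\<^sub>Z Y\<^sub>j + o\<^sup>j\<^sub>Z Z\<close> is the velocity of the Thompson geodesic at \<open>t = 0\<close>. The \<open>O(t\<^sup>2)\<close>
  term is a second-order Taylor remainder of \<open>t \<mapsto> \<lambda>\<^sup>t\<close>, uniform as long as the generalized
  eigenvalues of \<open>Y\<^sub>j Z\<^sup>-\<^sup>1\<close> stay in a compact subinterval of \<open>(0, \<infinity>)\<close>, which holds on boxes
  \<open>c I \<le> Z \<le> C I\<close>, \<open>\<parallel>Z\<parallel> \<le> N\<close>. A sweep \<open>T\<^sub>p\<close> makes \<open>k\<close> steps of size \<open>1/(pk) + O(1/p\<^sup>2)\<close>; starting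
  in the compact set, the iterates stay in such a box and within \<open>O(1/p)\<close> of the starting point,
  and the \<open>V\<^sub>j\<close> are bounded and Lipschitz there. Hence
  \<open>T\<^sub>p(X) - X = (1/(pk)) \<Sum>\<^sub>j V\<^sub>j(X) + O(1/p\<^sup>2)\<close>, and the fixed-point equation says
  \<open>\<Sum>\<^sub>j V\<^sub>j(X\<^sup>*) = 0\<close>, so \<open>\<Sum>\<^sub>j V\<^sub>j(X) = O(\<parallel>X - X\<^sup>*\<parallel>)\<close>.\<close>

section \<open>Quadratic forms and generalized eigenvalues\<close>

definition qform :: "real^'n::finite^'n \<Rightarrow> real^'n \<Rightarrow> real" where
  "qform A v = v \<bullet> (A *v v)"

lemma qform_add: "qform (A + B) v = qform A v + qform B v"
  by (simp add: qform_def matrix_vector_mult_add_rdistrib inner_add_right)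

lemma qform_diff: "qform (A - B) v = qform A v - qform B v"
  by (simp add: qform_def matrix_vector_mult_diff_rdistrib inner_diff_right)

lemma qform_scaleR: "qform (c *\<^sub>R A) v = c * qform A v"
  by (simp add: qform_def scaleR_matrix_vector_assoc[symmetric])

lemma qform_scaleR_vector: "qform A (c *\<^sub>R v) = c\<^sup>2 * qform A v"
  by (simp add: qform_def matrix_vector_mult_scaleR power2_eq_square)

lemma qform_zero_vector [simp]: "qform A 0 = 0"
  by (simp add: qform_def)

lemma norm_matrix_vector_mult_le:
  fixes A :: "real^'n::finite^'m::finite"
  shows "norm (A *v x) \<le> real CARD('m) * norm A * norm x"
proof -
  have "norm (A *v x) \<le> (\<Sum>i\<in>UNIV. \<bar>(A *v x) $ i\<bar>)"
    by (rule norm_le_l1_cart)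
  also have "\<dots> \<le> (\<Sum>i::'m\<in>UNIV. norm A * norm x)"
  proof (rule sum_mono)
    fix i
    have "\<bar>(A *v x) $ i\<bar> \<le> norm (A $ i) * norm x"
      by (simp add: matrix_mult_dot Cauchy_Schwarz_ineq2)
    also have "\<dots> \<le> norm A * norm x"
      by (rule mult_right_mono) (simp_all add: Finite_Cartesian_Product.norm_nth_le)
    finally show "\<bar>(A *v x) $ i\<bar> \<le> norm A * norm x" .
  qed
  finally show ?thesis by simp
qed

lemma abs_qform_le:
  fixes A :: "real^'n::finite^'n"
  shows "\<bar>qform A v\<bar> \<le> real CARD('n) * norm A * (norm v)\<^sup>2"
proof -
  have "\<bar>qform A v\<bar> \<le> norm v * norm (A *v v)"
    unfolding qform_def by (rule Cauchy_Schwarz_ineq2)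
  also have "\<dots> \<le> norm v * (real CARD('n) * norm A * norm v)"
    by (rule mult_left_mono[OF norm_matrix_vector_mult_le]) simp
  finally show ?thesis by (simp add: power2_eq_square algebra_simps)
qed

lemma spd_qform_pos: "spd X \<Longrightarrow> v \<noteq> 0 \<Longrightarrow> qform X v > 0"
  by (simp add: spd_def qform_def)

lemma spd_qform_nonneg: "spd X \<Longrightarrow> qform X v \<ge> 0"
  by (cases "v = 0") (auto dest: spd_qform_pos[of X v])

lemma spd_matrix_inv:
  fixes X :: "real^'n::finite^'n"
  assumes "spd X"
  shows "matrix_inv X ** X = mat 1" "X ** matrix_inv X = mat 1"
proof -
  have "\<forall>x. X *v x = 0 \<longrightarrow> x = 0"
    using assms by (auto simp: spd_def)
  then have "invertible X"
    by (simp add: matrix_left_invertible_ker invertible_left_inverse)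
  then have "X ** matrix_inv X = mat 1 \<and> matrix_inv X ** X = mat 1"
    unfolding invertible_def matrix_inv_def by (rule someI_ex)
  then show "matrix_inv X ** X = mat 1" "X ** matrix_inv X = mat 1" by auto
qed

text \<open>With \<open>h = B u\<close>, \<open>qform B (u + s h) = 2 s \<parallel>h\<parallel>\<^sup>2 + O(s\<^sup>2) \<le> 0\<close> for all \<open>s\<close>, forcing \<open>h = 0\<close>.\<close>
lemma qform_nonpos_zero_imp_kernel:
  fixes B :: "real^'n::finite^'n"
  assumes sym: "transpose B = B" and nonpos: "\<And>v. qform B v \<le> 0" and zero: "qform B u = 0"
  shows "B *v u = 0"
proof -
  define h where "h = B *v u"
  define c where "c = h \<bullet> h"
  define d where "d = qform B h"
  have expand: "qform B (u + s *\<^sub>R h) = 2 * s * c + s\<^sup>2 * d" for s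
  proof -
    have "u \<bullet> (B *v h) = h \<bullet> (B *v u)"
      by (metis dot_lmul_matrix inner_commute sym transpose_matrix_vector)
    then show ?thesis
      using zero by (simp add: qform_def c_def d_def h_def matrix_vector_right_distrib
          matrix_vector_mult_scaleR inner_add_left inner_add_right power2_eq_square algebra_simps)
  qed
  define D where "D = \<bar>d\<bar> + 1"
  have D: "D > 0" "2 * D + d > 0"
    unfolding D_def by (cases "d \<ge> 0"; simp)+
  have "2 * (c / D) * c + (c / D)\<^sup>2 * d \<le> 0"
    using nonpos[of "u + (c / D) *\<^sub>R h"] expand by simp
  moreover have "(2 * (c / D) * c + (c / D)\<^sup>2 * d) * D\<^sup>2 = c\<^sup>2 * (2 * D + d)"
    using D by (simp add: power2_eq_square field_simps)
  ultimately have "c\<^sup>2 * (2 * D + d) \<le> 0"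
    by (metis mult_nonpos_nonneg zero_le_power2)
  with D have "c = 0"
    by (simp add: mult_le_0_iff)
  then show ?thesis by (simp add: c_def h_def)
qed

lemma eigenvalue_imp_rayleigh:
  fixes X Y :: "real^'n::finite^'n"
  assumes X: "spd X" and e: "e \<in> eigenvalues (Y ** matrix_inv X)"
  shows "\<exists>u. u \<noteq> 0 \<and> qform Y u = e * qform X u"
proof -
  obtain w where w: "w \<noteq> 0" "(Y ** matrix_inv X) *v w = e *\<^sub>R w"
    using e by (auto simp: eigenvalues_def)
  define u where "u = matrix_inv X *v w"
  have w_eq: "w = X *v u"
    by (simp add: u_def matrix_vector_mul_assoc spd_matrix_inv[OF X])
  have "Y *v u = (Y ** matrix_inv X) *v w"
    unfolding u_def by (subst matrix_vector_mul_assoc[symmetric]) simp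
  then have "Y *v u = e *\<^sub>R (X *v u)"
    using w w_eq by simp
  then show ?thesis
    using w w_eq by (intro exI[of _ u]) (auto simp: qform_def)
qed

lemma rayleigh_extremum_imp_eigenvalue:
  fixes X Y :: "real^'n::finite^'n"
  assumes X: "spd X" and Y: "spd Y" and u: "u \<noteq> 0" "qform Y u = l * qform X u"
    and extremal: "(\<forall>v. qform Y v \<le> l * qform X v) \<or> (\<forall>v. l * qform X v \<le> qform Y v)"
  shows "l \<in> eigenvalues (Y ** matrix_inv X)"
proof -
  have sym: "transpose (Y - l *\<^sub>R X) = Y - l *\<^sub>R X" "transpose (l *\<^sub>R X - Y) = l *\<^sub>R X - Y"
    using X Y by (simp_all add: spd_def transpose_def vec_eq_iff)
  have "(Y - l *\<^sub>R X) *v u = 0"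
    using extremal
  proof
    assume "\<forall>v. qform Y v \<le> l * qform X v"
    then show ?thesis
      by (intro qform_nonpos_zero_imp_kernel[OF sym(1)]) (auto simp: qform_diff qform_scaleR u)
  next
    assume "\<forall>v. l * qform X v \<le> qform Y v"
    then have "(l *\<^sub>R X - Y) *v u = 0"
      by (intro qform_nonpos_zero_imp_kernel[OF sym(2)]) (auto simp: qform_diff qform_scaleR u)
    then show ?thesis
      by (simp add: matrix_vector_mult_diff_rdistrib)
  qed
  then have "Y *v u = l *\<^sub>R (X *v u)"
    by (simp add: matrix_vector_mult_diff_rdistrib scaleR_matrix_vector_assoc)
  moreover have "matrix_inv X *v (X *v u) = u"
    by (simp add: matrix_vector_mul_assoc spd_matrix_inv[OF X])
  ultimately have "(Y ** matrix_inv X) *v (X *v u) = l *\<^sub>R (X *v u)"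
    by (subst matrix_vector_mul_assoc[symmetric]) simp
  moreover have "X *v u \<noteq> 0"
    using spd_qform_pos[OF X u(1)] by (auto simp: qform_def)
  ultimately show ?thesis
    unfolding eigenvalues_def by blast
qed

lemma rayleigh_quotient_attains_max:
  fixes X Y :: "real^'n::finite^'n"
  assumes X: "spd X"
  shows "\<exists>u. u \<noteq> 0 \<and> (\<forall>v. qform Y v * qform X u \<le> qform Y u * qform X v)"
proof -
  have pos: "qform X v > 0" if "v \<in> sphere 0 1" for v
    using that by (intro spd_qform_pos[OF X]) auto
  have "continuous_on (sphere 0 1) (\<lambda>v. qform Y v / qform X v)"
    using pos unfolding qform_def by (intro continuous_intros) force
  then have "\<exists>u\<in>sphere 0 1. \<forall>v\<in>sphere 0 1. qform Y v / qform X v \<le> qform Y u / qform X u"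
    by (intro continuous_attains_sup) auto
  then obtain u where u: "u \<in> sphere 0 1"
    and max: "\<And>v. v \<in> sphere 0 1 \<Longrightarrow> qform Y v / qform X v \<le> qform Y u / qform X u"
    by blast
  have "qform Y v * qform X u \<le> qform Y u * qform X v" for v
  proof (cases "v = 0")
    case False
    let ?w = "(1 / norm v) *\<^sub>R v"
    have "qform Y ?w / qform X ?w \<le> qform Y u / qform X u"
      using max[of ?w] False by simp
    then have "qform Y v / qform X v \<le> qform Y u / qform X u"
      using False by (simp add: qform_scaleR_vector)
    then show ?thesis
      using pos[OF u] spd_qform_pos[OF X False] by (simp add: field_simps)
  qed simp
  then show ?thesis
    using u by (intro exI[of _ u]) auto
qed

lemma lam_max_rayleigh:
  fixes X Y :: "real^'n::finite^'n"
  assumes X: "spd X" and Y: "spd Y"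
  shows "\<forall>v. qform Y v \<le> lam_max (Y ** matrix_inv X) * qform X v"
    and "\<exists>u. u \<noteq> 0 \<and> qform Y u = lam_max (Y ** matrix_inv X) * qform X u"
proof -
  obtain u where u: "u \<noteq> 0" and max: "\<And>v. qform Y v * qform X u \<le> qform Y u * qform X v"
    using rayleigh_quotient_attains_max[OF X] by blast
  define l where "l = qform Y u / qform X u"
  have Xu: "qform X u > 0"
    using spd_qform_pos[OF X u] .
  have le: "qform Y v \<le> l * qform X v" for v
    using max[of v] Xu by (simp add: l_def field_simps)
  have eq: "qform Y u = l * qform X u"
    using Xu by (simp add: l_def)
  have "l \<in> eigenvalues (Y ** matrix_inv X)"
    using le by (intro rayleigh_extremum_imp_eigenvalue[OF X Y u eq]) blast
  moreover have "e \<le> l" if e: "e \<in> eigenvalues (Y ** matrix_inv X)" for e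
  proof -
    obtain w where "w \<noteq> 0" "qform Y w = e * qform X w"
      using eigenvalue_imp_rayleigh[OF X e] by blast
    then show ?thesis
      using le[of w] spd_qform_pos[OF X, of w] by simp
  qed
  ultimately have "lam_max (Y ** matrix_inv X) = l"
    unfolding lam_max_def by (intro cSup_eq_maximum) auto
  then show "\<forall>v. qform Y v \<le> lam_max (Y ** matrix_inv X) * qform X v"
    and "\<exists>u. u \<noteq> 0 \<and> qform Y u = lam_max (Y ** matrix_inv X) * qform X u"
    using le eq u by auto
qed

lemma lam_min_rayleigh:
  fixes X Y :: "real^'n::finite^'n"
  assumes X: "spd X" and Y: "spd Y"
  shows "\<forall>v. lam_min (Y ** matrix_inv X) * qform X v \<le> qform Y v"
    and "\<exists>u. u \<noteq> 0 \<and> qform Y u = lam_min (Y ** matrix_inv X) * qform X u"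
proof -
  obtain u where u: "u \<noteq> 0" and max: "\<And>v. qform X v * qform Y u \<le> qform X u * qform Y v"
    using rayleigh_quotient_attains_max[OF Y] by blast
  define l where "l = qform Y u / qform X u"
  have Xu: "qform X u > 0"
    using spd_qform_pos[OF X u] .
  have ge: "l * qform X v \<le> qform Y v" for v
    using max[of v] Xu by (simp add: l_def field_simps)
  have eq: "qform Y u = l * qform X u"
    using Xu by (simp add: l_def)
  have "l \<in> eigenvalues (Y ** matrix_inv X)"
    using ge by (intro rayleigh_extremum_imp_eigenvalue[OF X Y u eq]) blast
  moreover have "l \<le> e" if e: "e \<in> eigenvalues (Y ** matrix_inv X)" for e
  proof -
    obtain w where "w \<noteq> 0" "qform Y w = e * qform X w"
      using eigenvalue_imp_rayleigh[OF X e] by blast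
    then show ?thesis
      using ge[of w] spd_qform_pos[OF X, of w] by simp
  qed
  ultimately have "lam_min (Y ** matrix_inv X) = l"
    unfolding lam_min_def by (intro cInf_eq_minimum) auto
  then show "\<forall>v. lam_min (Y ** matrix_inv X) * qform X v \<le> qform Y v"
    and "\<exists>u. u \<noteq> 0 \<and> qform Y u = lam_min (Y ** matrix_inv X) * qform X u"
    using ge eq u by auto
qed

definition qform_between :: "real \<Rightarrow> real \<Rightarrow> real^'n::finite^'n \<Rightarrow> bool" where
  "qform_between c C X \<longleftrightarrow> (\<forall>v. c * (norm v)\<^sup>2 \<le> qform X v \<and> qform X v \<le> C * (norm v)\<^sup>2)"

lemma qform_between_le:
  fixes Z :: "real^'n::finite^'n"
  assumes "qform_between c C Z"
  shows "c \<le> C"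
proof -
  obtain i :: 'n where True by simp
  have "c * (norm (axis i (1::real)))\<^sup>2 \<le> C * (norm (axis i (1::real)))\<^sup>2"
    using assms unfolding qform_between_def by (meson order_trans)
  then show ?thesis by (simp add: norm_axis_1)
qed

lemma qform_between_mono:
  "qform_between c C Z \<Longrightarrow> c' \<le> c \<Longrightarrow> C \<le> C' \<Longrightarrow> qform_between c' C' Z"
  unfolding qform_between_def by (meson mult_right_mono order_trans zero_le_power2)

lemma lam_min_pos_le_lam_max:
  fixes Y Z :: "real^'n::finite^'n"
  assumes Z: "spd Z" and Y: "spd Y"
  shows "0 < lam_min (Y ** matrix_inv Z)" "lam_min (Y ** matrix_inv Z) \<le> lam_max (Y ** matrix_inv Z)"
proof -
  let ?a = "lam_min (Y ** matrix_inv Z)" and ?b = "lam_max (Y ** matrix_inv Z)"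
  obtain u where u: "u \<noteq> 0" "qform Y u = ?a * qform Z u"
    using lam_min_rayleigh(2)[OF Z Y] by blast
  have Zu: "qform Z u > 0"
    using spd_qform_pos[OF Z u(1)] .
  have "?a * qform Z u > 0"
    using u spd_qform_pos[OF Y u(1)] by simp
  then show a: "0 < ?a"
    using Zu by (simp add: zero_less_mult_iff)
  have "?a * qform Z u \<le> ?b * qform Z u"
    using lam_max_rayleigh(1)[OF Z Y] u by metis
  then show "?a \<le> ?b"
    using Zu by simp
qed

lemma lam_bounds:
  fixes X Y :: "real^'n::finite^'n"
  assumes X: "spd X" and Y: "spd Y" and qX: "qform_between c C X" and qY: "qform_between cy Cy Y"
    and c: "c > 0"
  shows "cy / C \<le> lam_min (Y ** matrix_inv X)" "lam_max (Y ** matrix_inv X) \<le> Cy / c"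
proof -
  let ?a = "lam_min (Y ** matrix_inv X)" and ?b = "lam_max (Y ** matrix_inv X)"
  have ab: "0 < ?a" "?a \<le> ?b"
    using lam_min_pos_le_lam_max[OF X Y] by auto
  have C: "C > 0"
    using qform_between_le[OF qX] c by simp
  obtain u where u: "u \<noteq> 0" "qform Y u = ?a * qform X u"
    using lam_min_rayleigh(2)[OF X Y] by blast
  have "cy * (norm u)\<^sup>2 \<le> qform Y u"
    using qY by (simp add: qform_between_def)
  also have "\<dots> = ?a * qform X u"
    by (rule u(2))
  also have "\<dots> \<le> ?a * (C * (norm u)\<^sup>2)"
    using qX ab by (intro mult_left_mono) (auto simp: qform_between_def)
  finally show "cy / C \<le> ?a"
    using u C by (simp add: divide_le_eq mult.commute mult.left_commute)
  obtain w where w: "w \<noteq> 0" "qform Y w = ?b * qform X w"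
    using lam_max_rayleigh(2)[OF X Y] by blast
  have "?b * (c * (norm w)\<^sup>2) \<le> ?b * qform X w"
    using qX ab by (intro mult_left_mono) (auto simp: qform_between_def)
  also have "\<dots> = qform Y w"
    by (rule w(2)[symmetric])
  also have "\<dots> \<le> Cy * (norm w)\<^sup>2"
    using qY by (simp add: qform_between_def)
  finally show "?b \<le> Cy / c"
    using w c by (simp add: le_divide_eq mult.commute mult.left_commute)
qed

lemma abs_quotient_diff_le:
  fixes q x x' n c Cq E :: real
  assumes "0 \<le> q" "q \<le> Cq * n" "c * n \<le> x" "c * n \<le> x'" "\<bar>x - x'\<bar> \<le> E * n" "n > 0" "c > 0"
  shows "\<bar>q / x - q / x'\<bar> \<le> Cq * E / c\<^sup>2"
proof -
  have pos: "x > 0" "x' > 0" "c * n > 0"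
    using assms by (auto intro: less_le_trans[OF mult_pos_pos])
  have "q / x - q / x' = q * (x' - x) / (x * x')"
    using pos by (simp add: field_simps)
  then have "\<bar>q / x - q / x'\<bar> = q * \<bar>x - x'\<bar> / (x * x')"
    using pos assms(1) by (simp add: abs_mult abs_divide abs_minus_commute)
  also have "\<dots> \<le> (Cq * n) * (E * n) / ((c * n) * (c * n))"
  proof (rule frac_le)
    show "0 \<le> Cq * n * (E * n)"
      using assms pos by (metis abs_ge_zero mult_nonneg_nonneg order_trans)
    show "q * \<bar>x - x'\<bar> \<le> Cq * n * (E * n)"
      using assms by (intro mult_mono) auto
    show "c * n * (c * n) \<le> x * x'"
      using mult_mono[OF assms(3,4)] pos by simp
  qed (use pos in simp)
  also have "\<dots> = Cq * E / c\<^sup>2"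
    using assms by (simp add: field_simps power2_eq_square)
  finally show ?thesis .
qed

text \<open>The extreme eigenvalue for one matrix is the Rayleigh quotient at some \<open>u\<close>, the one for the
  other is bounded by the Rayleigh quotient at the same \<open>u\<close>, and these quotients differ by
  \<open>O(\<parallel>X - X'\<parallel>)\<close>.\<close>
lemma lam_max_lipschitz:
  fixes X X' Y :: "real^'n::finite^'n"
  assumes "spd X" "spd X'" "spd Y" "qform_between c C X" "qform_between c C' X'"
    and qY: "qform_between cy Cy Y" and c: "c > 0"
  shows "\<bar>lam_max (Y ** matrix_inv X) - lam_max (Y ** matrix_inv X')\<bar>
           \<le> Cy * (real CARD('n) * norm (X - X')) / c\<^sup>2"
proof -
  have one_sided: "lam_max (Y ** matrix_inv X1) - lam_max (Y ** matrix_inv X2)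
      \<le> Cy * (real CARD('n) * norm (X1 - X2)) / c\<^sup>2"
    if X12: "spd X1" "spd X2" "qform_between c C1 X1" "qform_between c C2 X2" for X1 X2 C1 C2
  proof -
    obtain u where u: "u \<noteq> 0" "qform Y u = lam_max (Y ** matrix_inv X1) * qform X1 u"
      using lam_max_rayleigh(2)[OF X12(1) \<open>spd Y\<close>] by blast
    have pos: "qform X1 u > 0" "qform X2 u > 0"
      using spd_qform_pos X12 u by auto
    have "qform Y u / qform X2 u \<le> lam_max (Y ** matrix_inv X2)"
      using lam_max_rayleigh(1)[OF X12(2) \<open>spd Y\<close>] pos by (simp add: divide_le_eq)
    moreover have "\<bar>qform Y u / qform X1 u - qform Y u / qform X2 u\<bar>
        \<le> Cy * (real CARD('n) * norm (X1 - X2)) / c\<^sup>2"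
      using X12 qY c u(1) spd_qform_nonneg[OF \<open>spd Y\<close>] abs_qform_le[of "X1 - X2" u]
      by (intro abs_quotient_diff_le[where n = "(norm u)\<^sup>2"]) (auto simp: qform_between_def qform_diff)
    ultimately show ?thesis
      using u pos by simp
  qed
  show ?thesis
    using one_sided[of X X' C C'] one_sided[of X' X C' C] assms by (simp add: norm_minus_commute)
qed

lemma lam_min_lipschitz:
  fixes X X' Y :: "real^'n::finite^'n"
  assumes "spd X" "spd X'" "spd Y" "qform_between c C X" "qform_between c C' X'"
    and qY: "qform_between cy Cy Y" and c: "c > 0"
  shows "\<bar>lam_min (Y ** matrix_inv X) - lam_min (Y ** matrix_inv X')\<bar>
           \<le> Cy * (real CARD('n) * norm (X - X')) / c\<^sup>2"
proof -
  have one_sided: "lam_min (Y ** matrix_inv X2) - lam_min (Y ** matrix_inv X1)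
      \<le> Cy * (real CARD('n) * norm (X1 - X2)) / c\<^sup>2"
    if X12: "spd X1" "spd X2" "qform_between c C1 X1" "qform_between c C2 X2" for X1 X2 C1 C2
  proof -
    obtain u where u: "u \<noteq> 0" "qform Y u = lam_min (Y ** matrix_inv X1) * qform X1 u"
      using lam_min_rayleigh(2)[OF X12(1) \<open>spd Y\<close>] by blast
    have pos: "qform X1 u > 0" "qform X2 u > 0"
      using spd_qform_pos X12 u by auto
    have "lam_min (Y ** matrix_inv X2) \<le> qform Y u / qform X2 u"
      using lam_min_rayleigh(1)[OF X12(2) \<open>spd Y\<close>] pos by (simp add: le_divide_eq)
    moreover have "\<bar>qform Y u / qform X1 u - qform Y u / qform X2 u\<bar>
        \<le> Cy * (real CARD('n) * norm (X1 - X2)) / c\<^sup>2"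
      using X12 qY c u(1) spd_qform_nonneg[OF \<open>spd Y\<close>] abs_qform_le[of "X1 - X2" u]
      by (intro abs_quotient_diff_le[where n = "(norm u)\<^sup>2"]) (auto simp: qform_between_def qform_diff)
    ultimately show ?thesis
      using u pos by simp
  qed
  show ?thesis
    using one_sided[of X X' C C'] one_sided[of X' X C' C] assms by (simp add: norm_minus_commute)
qed

section \<open>The inverse logarithmic mean and Taylor remainders\<close>

definition inv_log_mean :: "real \<Rightarrow> real \<Rightarrow> real" where
  "inv_log_mean a b = (if a = b then 1 / a else (ln b - ln a) / (b - a))"

lemma convex_comb_ge:
  fixes A a b s :: real
  assumes "A \<le> a" "A \<le> b" "0 \<le> s" "s \<le> 1"
  shows "A \<le> (1 - s) * a + s * b"
proof -
  have "(1 - s) * a + s * b - A = (1 - s) * (a - A) + s * (b - A)"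
    by (simp add: algebra_simps)
  moreover have "(1 - s) * (a - A) \<ge> 0" "s * (b - A) \<ge> 0"
    using assms by auto
  ultimately show ?thesis by linarith
qed

lemma inv_log_mean_has_integral:
  assumes a: "a > 0" and b: "b > 0"
  shows "((\<lambda>s. 1 / ((1 - s) * a + s * b)) has_integral inv_log_mean a b) {0..1}"
proof (cases "a = b")
  case True
  then show ?thesis
    using has_integral_const_real[of "1 / a" 0 1] by (simp add: inv_log_mean_def algebra_simps)
next
  case False
  define F where "F s = ln ((1 - s) * a + s * b) / (b - a)" for s
  have pos: "(1 - s) * a + s * b > 0" if "s \<in> {0..1}" for s
    using convex_comb_ge[of "min a b" a b s] that a b by auto
  have "(F has_vector_derivative 1 / ((1 - s) * a + s * b)) (at s within {0..1})"
    if "s \<in> {0..1}" for s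
  proof -
    have "(F has_real_derivative 1 / ((1 - s) * a + s * b) * (b - a) / (b - a)) (at s)"
      unfolding F_def using pos[OF that]
      by (intro DERIV_cdivide DERIV_chain2[OF DERIV_ln_divide]) (auto intro!: derivative_eq_intros)
    then show ?thesis
      using False by (simp add: has_real_derivative_iff_has_vector_derivative has_vector_derivative_at_within)
  qed
  then have "((\<lambda>s. 1 / ((1 - s) * a + s * b)) has_integral F 1 - F 0) {0..1}"
    by (intro fundamental_theorem_of_calculus) auto
  moreover have "F 1 - F 0 = inv_log_mean a b"
    using False by (simp add: F_def inv_log_mean_def diff_divide_distrib)
  ultimately show ?thesis by simp
qed

lemma inv_log_mean_lipschitz:
  assumes A: "A > 0" and "A \<le> a" "A \<le> b" "A \<le> a'" "A \<le> b'"
  shows "\<bar>inv_log_mean a b - inv_log_mean a' b'\<bar> \<le> (\<bar>a - a'\<bar> + \<bar>b - b'\<bar>) / A\<^sup>2"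
proof -
  have I: "((\<lambda>s. 1 / ((1 - s) * a + s * b) - 1 / ((1 - s) * a' + s * b'))
      has_integral (inv_log_mean a b - inv_log_mean a' b')) {0..1}"
    using assms by (intro has_integral_diff inv_log_mean_has_integral) auto
  have "norm (inv_log_mean a b - inv_log_mean a' b')
      \<le> (\<bar>a - a'\<bar> + \<bar>b - b'\<bar>) / A\<^sup>2 * Henstock_Kurzweil_Integration.content {0..1::real}"
  proof (rule has_integral_bound_real[OF _ _ I, where S = "{}"])
    fix s :: real assume s: "s \<in> {0..1} - {}"
    define p where "p = (1 - s) * a + s * b"
    define p' where "p' = (1 - s) * a' + s * b'"
    have p: "A \<le> p" "A \<le> p'"
      using s assms convex_comb_ge by (auto simp: p_def p'_def)
    have "\<bar>p' - p\<bar> = \<bar>(1 - s) * (a' - a) + s * (b' - b)\<bar>"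
      by (simp add: p_def p'_def algebra_simps)
    also have "\<dots> \<le> (1 - s) * \<bar>a' - a\<bar> + s * \<bar>b' - b\<bar>"
      using s by (auto intro!: order_trans[OF abs_triangle_ineq] simp: abs_mult)
    also have "\<dots> \<le> \<bar>a - a'\<bar> + \<bar>b - b'\<bar>"
      using s by (auto simp: abs_minus_commute intro!: add_mono mult_left_le_one_le)
    finally have num: "\<bar>p' - p\<bar> \<le> \<bar>a - a'\<bar> + \<bar>b - b'\<bar>" .
    have "norm (1 / p - 1 / p') = \<bar>p' - p\<bar> / (p * p')"
      using p A by (simp add: field_simps abs_divide)
    also have "\<dots> \<le> (\<bar>a - a'\<bar> + \<bar>b - b'\<bar>) / (A * A)"
      by (rule frac_le) (use num p A in \<open>auto intro: mult_mono\<close>)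
    finally show "norm (1 / ((1 - s) * a + s * b) - 1 / ((1 - s) * a' + s * b'))
        \<le> (\<bar>a - a'\<bar> + \<bar>b - b'\<bar>) / A\<^sup>2"
      by (simp add: p_def p'_def power2_eq_square)
  qed auto
  then show ?thesis by simp
qed

lemma abs_inv_log_mean_le:
  assumes A: "A > 0" and "A \<le> a" "A \<le> b"
  shows "\<bar>inv_log_mean a b\<bar> \<le> 1 / A"
proof -
  have I: "((\<lambda>s. 1 / ((1 - s) * a + s * b)) has_integral inv_log_mean a b) {0..1}"
    using assms by (intro inv_log_mean_has_integral) auto
  have "norm (inv_log_mean a b) \<le> 1 / A * Henstock_Kurzweil_Integration.content {0..1::real}"
  proof (rule has_integral_bound_real[OF _ _ I, where S = "{}"])
    fix s :: real assume "s \<in> {0..1} - {}"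
    then have "A \<le> (1 - s) * a + s * b"
      using assms convex_comb_ge by auto
    then show "norm (1 / ((1 - s) * a + s * b)) \<le> 1 / A"
      using A by (simp add: frac_le)
  qed (use A in auto)
  then show ?thesis by simp
qed

definition powr_rem :: "real \<Rightarrow> real \<Rightarrow> real" where
  "powr_rem t l = l powr t - 1 - t * ln l"

definition powr_rem_deriv :: "real \<Rightarrow> real \<Rightarrow> real" where
  "powr_rem_deriv t l = t * l powr (t - 1) - t / l"

lemma powr_rem_has_derivative:
  assumes "l > 0"
  shows "(powr_rem t has_real_derivative powr_rem_deriv t l) (at l)"
proof -
  have "((\<lambda>l. l powr t - 1 - t * ln l) has_real_derivative t * l powr (t - 1) - 0 - t * (1 / l)) (at l)"
    by (intro derivative_intros DERIV_cmult has_real_derivative_powr DERIV_ln_divide assms)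
  then show ?thesis
    by (simp add: powr_rem_def[abs_def] powr_rem_deriv_def)
qed

text \<open>The first-order Taylor remainders of \<open>phi\<close> and \<open>psi\<close> in \<open>t\<close> are difference quotients of
  \<open>powr_rem t\<close>, hence values of its derivative by the mean value theorem.\<close>
lemma phi_psi_rem_mean_value:
  assumes a: "0 < a" and ab: "a \<le> b"
  shows "\<exists>z. a \<le> z \<and> z \<le> b \<and> phi a b t - t * inv_log_mean a b = powr_rem_deriv t z \<and>
            psi a b t - 1 - t * (ln a - a * inv_log_mean a b) = powr_rem t a - a * powr_rem_deriv t z"
proof (cases "a = b")
  case True
  have "a * a powr (t - 1) = a powr t"
    using a by (simp add: powr_diff)
  then show ?thesis
    using True a by (intro exI[of _ a])
      (simp add: phi_def psi_def inv_log_mean_def powr_rem_def powr_rem_deriv_def field_simps)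
next
  case False
  then have lt: "a < b" using ab by simp
  obtain z where z: "a < z" "z < b"
    and mvt: "powr_rem t b - powr_rem t a = (b - a) * powr_rem_deriv t z"
    using MVT2[OF lt, of "powr_rem t" "powr_rem_deriv t"] powr_rem_has_derivative a
    by (metis less_le_trans)
  have inv: "(b - a) * inverse (b - a) = 1"
    using lt by simp
  have unfold: "phi a b t = (b powr t - a powr t) * inverse (b - a)"
    "psi a b t = (b * a powr t - a * b powr t) * inverse (b - a)"
    "inv_log_mean a b = (ln b - ln a) * inverse (b - a)"
    using lt by (simp_all add: phi_def psi_def inv_log_mean_def divide_inverse)
  have "phi a b t - t * inv_log_mean a b = (powr_rem t b - powr_rem t a) / (b - a)"
    unfolding unfold powr_rem_def divide_inverse by algebra
  moreover have "psi a b t - 1 - t * (ln a - a * inv_log_mean a b)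
      = powr_rem t a - a * ((powr_rem t b - powr_rem t a) / (b - a))"
    using inv unfolding unfold powr_rem_def divide_inverse by algebra
  ultimately show ?thesis
    using mvt lt z by (intro exI[of _ z]) auto
qed

lemma abs_exp_minus_one_le:
  fixes s :: real
  shows "\<bar>exp s - 1\<bar> \<le> \<bar>s\<bar> * exp \<bar>s\<bar>"
proof -
  obtain u where u: "\<bar>u\<bar> \<le> \<bar>s\<bar>" and e: "exp s = (\<Sum>m<1. s ^ m / fact m) + exp u / fact 1 * s ^ 1"
    using Maclaurin_exp_le[of s 1] by blast
  have "\<bar>exp s - 1\<bar> = exp u * \<bar>s\<bar>"
    using e by (simp add: abs_mult)
  also have "\<dots> \<le> exp \<bar>s\<bar> * \<bar>s\<bar>"
    using u by (intro mult_right_mono) auto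
  finally show ?thesis by (simp add: mult.commute)
qed

lemma abs_exp_minus_one_minus_le:
  fixes s :: real
  shows "\<bar>exp s - 1 - s\<bar> \<le> s\<^sup>2 * exp \<bar>s\<bar>"
proof -
  obtain u where u: "\<bar>u\<bar> \<le> \<bar>s\<bar>" and e: "exp s = (\<Sum>m<2. s ^ m / fact m) + exp u / fact 2 * s ^ 2"
    using Maclaurin_exp_le[of s 2] by blast
  have "\<bar>exp s - 1 - s\<bar> = exp u / 2 * s\<^sup>2"
    using e by (simp add: abs_mult numeral_2_eq_2)
  also have "\<dots> \<le> exp \<bar>s\<bar> * s\<^sup>2"
  proof (rule mult_right_mono)
    have "exp u \<le> exp \<bar>s\<bar>"
      using u by simp
    then show "exp u / 2 \<le> exp \<bar>s\<bar>"
      using exp_gt_zero[of u] by linarith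
  qed simp
  finally show ?thesis by (simp add: mult.commute)
qed

lemma powr_rem_bounds:
  assumes A: "0 < A" and l: "A \<le> l" "l \<le> B" and t: "0 \<le> t" "t \<le> 1"
  defines "L \<equiv> \<bar>ln A\<bar> + \<bar>ln B\<bar>"
  shows "\<bar>powr_rem_deriv t l\<bar> \<le> t\<^sup>2 * (L * exp L / A)"
    and "\<bar>powr_rem t l\<bar> \<le> t\<^sup>2 * (L\<^sup>2 * exp L)"
proof -
  have l0: "l > 0" using A l by simp
  have "\<bar>ln l\<bar> \<le> L"
    using A l l0 ln_le_cancel_iff[of A l] ln_le_cancel_iff[of l B] unfolding L_def by linarith
  define s where "s = t * ln l"
  have s: "\<bar>s\<bar> \<le> t * L"
    unfolding s_def using t \<open>\<bar>ln l\<bar> \<le> L\<close> by (simp add: abs_mult mult_left_mono)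
  have L0: "L \<ge> 0" by (simp add: L_def)
  have "\<bar>s\<bar> \<le> L"
    using s t L0 by (meson mult_left_le_one_le order_trans)
  then have exp_s: "exp \<bar>s\<bar> \<le> exp L"
    by simp
  have powr_eq: "l powr t = exp s"
    using l0 by (simp add: powr_def s_def)
  have "powr_rem_deriv t l = (t / l) * (l powr t - 1)"
    using l0 by (simp add: powr_rem_deriv_def powr_diff field_simps)
  then have "\<bar>powr_rem_deriv t l\<bar> = (t / l) * \<bar>exp s - 1\<bar>"
    using t l0 powr_eq by (simp add: abs_mult)
  also have "\<dots> \<le> (t / A) * ((t * L) * exp L)"
  proof (rule mult_mono)
    show "t / l \<le> t / A" using t A l by (simp add: frac_le)
    show "\<bar>exp s - 1\<bar> \<le> t * L * exp L"
      using abs_exp_minus_one_le[of s] s exp_s by (meson mult_mono abs_ge_zero exp_ge_zero order_trans)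
  qed (use t A in auto)
  also have "\<dots> = t\<^sup>2 * (L * exp L / A)"
    by (simp add: power2_eq_square)
  finally show "\<bar>powr_rem_deriv t l\<bar> \<le> t\<^sup>2 * (L * exp L / A)" .
  have "\<bar>powr_rem t l\<bar> = \<bar>exp s - 1 - s\<bar>"
    using powr_eq by (simp add: powr_rem_def s_def)
  also have "\<dots> \<le> s\<^sup>2 * exp \<bar>s\<bar>"
    by (rule abs_exp_minus_one_minus_le)
  also have "\<dots> \<le> (t * L)\<^sup>2 * exp L"
  proof (rule mult_mono)
    show "s\<^sup>2 \<le> (t * L)\<^sup>2"
      using s by (metis abs_ge_zero power2_abs power_mono)
  qed (use exp_s in auto)
  finally show "\<bar>powr_rem t l\<bar> \<le> t\<^sup>2 * (L\<^sup>2 * exp L)"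
    by (simp add: power_mult_distrib)
qed

definition geo_rem_const :: "real \<Rightarrow> real \<Rightarrow> real" where
  "geo_rem_const A B =
     (let L = \<bar>ln A\<bar> + \<bar>ln B\<bar> in (1 + B) * (L * exp L / A) + L\<^sup>2 * exp L)"

lemma geo_rem_const_nonneg: "0 < A \<Longrightarrow> 0 \<le> B \<Longrightarrow> 0 \<le> geo_rem_const A B"
  by (simp add: geo_rem_const_def Let_def)

lemma phi_psi_second_order:
  assumes A: "0 < A" and ab: "A \<le> a" "a \<le> b" "b \<le> B" and t: "0 \<le> t" "t \<le> 1"
  shows "\<bar>phi a b t - t * inv_log_mean a b\<bar> \<le> geo_rem_const A B * t\<^sup>2"
    and "\<bar>psi a b t - 1 - t * (ln a - a * inv_log_mean a b)\<bar> \<le> geo_rem_const A B * t\<^sup>2"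
proof -
  define L where "L = \<bar>ln A\<bar> + \<bar>ln B\<bar>"
  define P where "P = L * exp L / A"
  define Q where "Q = L\<^sup>2 * exp L"
  have PQ: "P \<ge> 0" "Q \<ge> 0" "geo_rem_const A B = (1 + B) * P + Q"
    using A by (simp_all add: P_def Q_def L_def geo_rem_const_def Let_def)
  have a0: "a > 0" and B0: "B > 0"
    using ab A by auto
  obtain z where z: "a \<le> z" "z \<le> b"
    and phi_eq: "phi a b t - t * inv_log_mean a b = powr_rem_deriv t z"
    and psi_eq: "psi a b t - 1 - t * (ln a - a * inv_log_mean a b) = powr_rem t a - a * powr_rem_deriv t z"
    using phi_psi_rem_mean_value[OF a0 ab(2)] by blast
  have deriv_z: "\<bar>powr_rem_deriv t z\<bar> \<le> t\<^sup>2 * P"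
    unfolding P_def L_def using ab z A t by (intro powr_rem_bounds(1)) auto
  have rem_a: "\<bar>powr_rem t a\<bar> \<le> t\<^sup>2 * Q"
    unfolding Q_def L_def using ab A t by (intro powr_rem_bounds(2)) auto
  show "\<bar>phi a b t - t * inv_log_mean a b\<bar> \<le> geo_rem_const A B * t\<^sup>2"
    using deriv_z PQ B0 unfolding phi_eq by (simp add: algebra_simps add_increasing2)
  have "\<bar>powr_rem t a - a * powr_rem_deriv t z\<bar> \<le> \<bar>powr_rem t a\<bar> + \<bar>a * powr_rem_deriv t z\<bar>"
    by (rule abs_triangle_ineq4)
  also have "\<dots> = \<bar>powr_rem t a\<bar> + a * \<bar>powr_rem_deriv t z\<bar>"
    using a0 by (simp add: abs_mult)
  also have "\<dots> \<le> t\<^sup>2 * Q + B * (t\<^sup>2 * P)"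
    using rem_a deriv_z ab a0 by (intro add_mono mult_mono) auto
  also have "\<dots> \<le> geo_rem_const A B * t\<^sup>2"
    using PQ by (simp add: algebra_simps)
  finally show "\<bar>psi a b t - 1 - t * (ln a - a * inv_log_mean a b)\<bar> \<le> geo_rem_const A B * t\<^sup>2"
    unfolding psi_eq .
qed

lemma min_one_le_powr:
  fixes a t :: real
  assumes "0 < a" "0 \<le> t" "t \<le> 1"
  shows "min 1 a \<le> a powr t"
proof (cases "a \<ge> 1")
  case False
  then have "a powr 1 \<le> a powr t"
    using assms by (intro powr_mono') auto
  then show ?thesis using assms by simp
qed (use ge_one_powr_ge_zero assms in simp)

lemma powr_le_max_one:
  fixes b t :: real
  assumes "0 < b" "0 \<le> t" "t \<le> 1"
  shows "b powr t \<le> max 1 b"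
proof (cases "b \<le> 1")
  case True
  then have "b powr t \<le> b powr 0"
    using assms by (intro powr_mono') auto
  then show ?thesis using assms by simp
next
  case False
  then have "b powr t \<le> b powr 1"
    using assms by (intro powr_mono) auto
  then show ?thesis using assms by simp
qed

text \<open>The combination \<open>phi y + psi z\<close> is affine in \<open>y\<close> and equals \<open>z a\<^sup>t\<close> at \<open>y = a z\<close> and
  \<open>z b\<^sup>t\<close> at \<open>y = b z\<close>; since \<open>phi \<ge> 0\<close> it lies between them.\<close>
lemma phi_psi_comb_between:
  fixes a b t y z :: real
  assumes a: "0 < a" "a \<le> b" and t: "0 \<le> t" "t \<le> 1" and z: "0 \<le> z"
    and y: "a * z \<le> y" "y \<le> b * z"
  shows "z * a powr t \<le> phi a b t * y + psi a b t * z"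
    and "phi a b t * y + psi a b t * z \<le> z * b powr t"
proof -
  have "phi a b t * a + psi a b t = a powr t \<and> phi a b t * b + psi a b t = b powr t"
  proof (cases "a = b")
    case True
    have "a * a powr (t - 1) = a powr t"
      using a by (simp add: powr_diff)
    then show ?thesis
      using True by (simp add: phi_def psi_def algebra_simps)
  next
    case False
    then have "(b - a) * inverse (b - a) = 1" by simp
    moreover have "phi a b t = (b powr t - a powr t) * inverse (b - a)"
      "psi a b t = (b * a powr t - a * b powr t) * inverse (b - a)"
      using False a by (simp_all add: phi_def psi_def divide_inverse)
    ultimately show ?thesis
      by algebra
  qed
  then have at_a: "phi a b t * a + psi a b t = a powr t" and at_b: "phi a b t * b + psi a b t = b powr t"
    by auto
  have "phi a b t \<ge> 0"
    using a t by (simp add: phi_def powr_mono2 divide_nonneg_pos)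
  then have "phi a b t * (y - a * z) \<ge> 0" "phi a b t * (b * z - y) \<ge> 0"
    using y by auto
  moreover have "phi a b t * y + psi a b t * z - z * a powr t = phi a b t * (y - a * z)"
    "z * b powr t - (phi a b t * y + psi a b t * z) = phi a b t * (b * z - y)"
    by (simp_all add: algebra_simps flip: at_a at_b)
  ultimately show "z * a powr t \<le> phi a b t * y + psi a b t * z"
    "phi a b t * y + psi a b t * z \<le> z * b powr t"
    by linarith+
qed

section \<open>One geodesic step\<close>

definition geodesic_velocity :: "real^'n::finite^'n \<Rightarrow> real^'n^'n \<Rightarrow> real^'n^'n" where
  "geodesic_velocity Y Z = m_coef Y Z *\<^sub>R Y + o_coef Y Z *\<^sub>R Z"

lemma m_coef_o_coef_eq:
  fixes Y Z :: "real^'n::finite^'n"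
  assumes Z: "spd Z" and Y: "spd Y"
  defines "a \<equiv> lam_min (Y ** matrix_inv Z)" and "b \<equiv> lam_max (Y ** matrix_inv Z)"
  shows "m_coef Y Z = inv_log_mean a b"
    and "o_coef Y Z = ln a - a * inv_log_mean a b"
proof -
  have ab: "0 < a" "a \<le> b"
    using lam_min_pos_le_lam_max[OF Z Y] by (auto simp: a_def b_def)
  show "m_coef Y Z = inv_log_mean a b"
    using ab by (auto simp: m_coef_def inv_log_mean_def Let_def a_def b_def)
  show "o_coef Y Z = ln a - a * inv_log_mean a b"
  proof (cases "a = b")
    case True
    then show ?thesis
      using ab by (simp add: o_coef_def inv_log_mean_def Let_def a_def b_def)
  next
    case False
    then have "(b - a) * inverse (b - a) = 1" by simp
    moreover have "o_coef Y Z = (b * ln a - a * ln b) * inverse (b - a)"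
      "inv_log_mean a b = (ln b - ln a) * inverse (b - a)"
      using False ab by (simp_all add: o_coef_def inv_log_mean_def Let_def divide_inverse a_def b_def)
    ultimately show ?thesis by algebra
  qed
qed

definition o_coef_bound :: "real \<Rightarrow> real \<Rightarrow> real" where
  "o_coef_bound A B = \<bar>ln A\<bar> + \<bar>ln B\<bar> + B / A"

lemma abs_m_coef_o_coef_le:
  fixes Y Z :: "real^'n::finite^'n"
  assumes Z: "spd Z" and Y: "spd Y"
    and A: "0 < A" "A \<le> lam_min (Y ** matrix_inv Z)" and B: "lam_max (Y ** matrix_inv Z) \<le> B"
  shows "\<bar>m_coef Y Z\<bar> \<le> 1 / A" "\<bar>o_coef Y Z\<bar> \<le> o_coef_bound A B"
proof -
  let ?a = "lam_min (Y ** matrix_inv Z)" and ?b = "lam_max (Y ** matrix_inv Z)"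
  have ab: "?a \<le> ?b"
    using lam_min_pos_le_lam_max[OF Z Y] by simp
  have M: "\<bar>inv_log_mean ?a ?b\<bar> \<le> 1 / A"
    using abs_inv_log_mean_le A ab by simp
  then show "\<bar>m_coef Y Z\<bar> \<le> 1 / A"
    by (simp add: m_coef_o_coef_eq[OF Z Y])
  have "\<bar>ln ?a\<bar> \<le> \<bar>ln A\<bar> + \<bar>ln B\<bar>"
    using A ab B ln_le_cancel_iff[of A ?a] ln_le_cancel_iff[of ?a B] by linarith
  moreover have "\<bar>?a * inv_log_mean ?a ?b\<bar> \<le> B * (1 / A)"
    unfolding abs_mult using M A ab B by (intro mult_mono) auto
  ultimately have "\<bar>ln ?a - ?a * inv_log_mean ?a ?b\<bar> \<le> o_coef_bound A B"
    unfolding o_coef_bound_def using abs_triangle_ineq4[of "ln ?a" "?a * inv_log_mean ?a ?b"] by simp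
  then show "\<bar>o_coef Y Z\<bar> \<le> o_coef_bound A B"
    by (simp add: m_coef_o_coef_eq[OF Z Y])
qed

lemma norm_geodesic_velocity_le:
  fixes Y Z :: "real^'n::finite^'n"
  assumes "spd Z" "spd Y"
    and "0 < A" "A \<le> lam_min (Y ** matrix_inv Z)" "lam_max (Y ** matrix_inv Z) \<le> B"
  shows "norm (geodesic_velocity Y Z) \<le> norm Y / A + o_coef_bound A B * norm Z"
proof -
  have "norm (geodesic_velocity Y Z) \<le> \<bar>m_coef Y Z\<bar> * norm Y + \<bar>o_coef Y Z\<bar> * norm Z"
    unfolding geodesic_velocity_def by (rule order_trans[OF norm_triangle_ineq]) simp
  also have "\<dots> \<le> 1 / A * norm Y + o_coef_bound A B * norm Z"
    using abs_m_coef_o_coef_le[OF assms] by (intro add_mono mult_right_mono) auto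
  finally show ?thesis by simp
qed

lemma thompson_geo_second_order:
  fixes Y Z :: "real^'n::finite^'n"
  assumes Z: "spd Z" and Y: "spd Y" and t: "0 \<le> t" "t \<le> 1"
    and A: "0 < A" "A \<le> lam_min (Y ** matrix_inv Z)" and B: "lam_max (Y ** matrix_inv Z) \<le> B"
  shows "norm (thompson_geo Z t Y - Z - t *\<^sub>R geodesic_velocity Y Z)
           \<le> geo_rem_const A B * t\<^sup>2 * (norm Y + norm Z)"
proof -
  let ?a = "lam_min (Y ** matrix_inv Z)" and ?b = "lam_max (Y ** matrix_inv Z)"
  define r1 where "r1 = phi ?a ?b t - t * inv_log_mean ?a ?b"
  define r2 where "r2 = psi ?a ?b t - 1 - t * (ln ?a - ?a * inv_log_mean ?a ?b)"
  have r: "\<bar>r1\<bar> \<le> geo_rem_const A B * t\<^sup>2" "\<bar>r2\<bar> \<le> geo_rem_const A B * t\<^sup>2"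
    unfolding r1_def r2_def using lam_min_pos_le_lam_max[OF Z Y] A B t
    by (intro phi_psi_second_order; simp)+
  have "thompson_geo Z t Y - Z - t *\<^sub>R geodesic_velocity Y Z = r1 *\<^sub>R Y + r2 *\<^sub>R Z"
    by (simp add: thompson_geo_def geodesic_velocity_def m_coef_o_coef_eq[OF Z Y] r1_def r2_def
        Let_def algebra_simps)
  also have "norm \<dots> \<le> \<bar>r1\<bar> * norm Y + \<bar>r2\<bar> * norm Z"
    by (rule order_trans[OF norm_triangle_ineq]) simp
  also have "\<dots> \<le> geo_rem_const A B * t\<^sup>2 * norm Y + geo_rem_const A B * t\<^sup>2 * norm Z"
    using r by (intro add_mono mult_right_mono) auto
  finally show ?thesis
    by (simp add: distrib_left)
qed

lemma thompson_geo_spd_bounds: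
  fixes Y Z :: "real^'n::finite^'n"
  assumes Z: "spd Z" and Y: "spd Y" and qZ: "qform_between c C Z" and qY: "qform_between cy Cy Y"
    and c: "c > 0" and cy: "cy > 0" and t: "0 \<le> t" "t \<le> 1"
  shows "spd (thompson_geo Z t Y)"
    and "qform_between (c * min 1 (cy / C)) (C * max 1 (Cy / c)) (thompson_geo Z t Y)"
proof -
  let ?a = "lam_min (Y ** matrix_inv Z)" and ?b = "lam_max (Y ** matrix_inv Z)"
  define Z' where "Z' = thompson_geo Z t Y"
  have Z'_eq: "Z' = phi ?a ?b t *\<^sub>R Y + psi ?a ?b t *\<^sub>R Z"
    by (simp add: Z'_def thompson_geo_def Let_def)
  have ab: "0 < ?a" "?a \<le> ?b" "cy / C \<le> ?a" "?b \<le> Cy / c"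
    using lam_min_pos_le_lam_max[OF Z Y] lam_bounds[OF Z Y qZ qY c] by auto
  have C: "C > 0"
    using qform_between_le[OF qZ] c by simp
  have qZ': "c * min 1 (cy / C) * (norm v)\<^sup>2 \<le> qform Z' v \<and> qform Z' v \<le> C * max 1 (Cy / c) * (norm v)\<^sup>2"
    for v
  proof -
    have z: "c * (norm v)\<^sup>2 \<le> qform Z v" "qform Z v \<le> C * (norm v)\<^sup>2"
      using qZ by (auto simp: qform_between_def)
    have z0: "qform Z v \<ge> 0"
      by (rule spd_qform_nonneg[OF Z])
    have "?a * qform Z v \<le> qform Y v" "qform Y v \<le> ?b * qform Z v"
      using lam_min_rayleigh(1)[OF Z Y] lam_max_rayleigh(1)[OF Z Y] by auto
    then have geo: "qform Z v * ?a powr t \<le> qform Z' v" "qform Z' v \<le> qform Z v * ?b powr t"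
      using phi_psi_comb_between[OF ab(1,2) t z0] by (simp_all add: Z'_eq qform_add qform_scaleR)
    have "c * min 1 (cy / C) * (norm v)\<^sup>2 = (c * (norm v)\<^sup>2) * min 1 (cy / C)"
      by simp
    also have "\<dots> \<le> qform Z v * min 1 ?a"
      using z(1) z0 ab C cy by (intro mult_mono) auto
    also have "\<dots> \<le> qform Z v * ?a powr t"
      using min_one_le_powr[OF ab(1) t] z0 by (rule mult_left_mono)
    finally have lower: "c * min 1 (cy / C) * (norm v)\<^sup>2 \<le> qform Z' v"
      using geo by linarith
    have "qform Z v * ?b powr t \<le> qform Z v * max 1 ?b"
      using powr_le_max_one[of ?b t] ab t z0 by (intro mult_left_mono) auto
    also have "\<dots> \<le> C * (norm v)\<^sup>2 * max 1 (Cy / c)"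
      using z ab z0 by (intro mult_mono) auto
    finally have "qform Z' v \<le> C * max 1 (Cy / c) * (norm v)\<^sup>2"
      using geo by (simp add: mult_ac)
    with lower show ?thesis ..
  qed
  then show "qform_between (c * min 1 (cy / C)) (C * max 1 (Cy / c)) (thompson_geo Z t Y)"
    by (simp add: qform_between_def Z'_def)
  have "transpose Y = Y" "transpose Z = Z"
    using Y Z by (auto simp: spd_def)
  then have "transpose Z' = Z'"
    by (simp add: Z'_eq transpose_def vec_eq_iff)
  moreover have "0 < qform Z' x" if "x \<noteq> 0" for x
  proof -
    have "0 < c * min 1 (cy / C) * (norm x)\<^sup>2"
      using that c cy C by simp
    then show ?thesis
      using qZ'[of x] by linarith
  qed
  ultimately show "spd (thompson_geo Z t Y)"
    by (simp add: spd_def qform_def Z'_def)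
qed

lemma ln_lipschitz:
  fixes x y A :: real
  assumes "0 < A" "A \<le> x" "A \<le> y"
  shows "\<bar>ln x - ln y\<bar> \<le> \<bar>x - y\<bar> / A"
proof -
  have pos: "x > 0" "y > 0"
    using assms by auto
  have "ln x - ln y \<le> (x - y) / y" "ln y - ln x \<le> (y - x) / x"
    using ln_le_minus_one[of "x / y"] ln_le_minus_one[of "y / x"] pos
    by (simp_all add: ln_div diff_divide_distrib)
  moreover have "(x - y) / y \<le> \<bar>x - y\<bar> / A" "(y - x) / x \<le> \<bar>x - y\<bar> / A"
    using assms pos by (auto intro!: frac_le)
  ultimately show ?thesis by linarith
qed

lemma geodesic_velocity_lipschitz:
  fixes Y Z Z' :: "real^'n::finite^'n"
  assumes Z: "spd Z" and Z': "spd Z'" and Y: "spd Y"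
    and qZ: "qform_between c C Z" and qZ': "qform_between c C Z'" and qY: "qform_between cy Cy Y"
    and c: "c > 0" and A: "A > 0" "A \<le> cy / C" and B: "Cy / c \<le> B" and N: "norm Z \<le> N"
  defines "K \<equiv> Cy * real CARD('n) / c\<^sup>2"
  shows "norm (geodesic_velocity Y Z - geodesic_velocity Y Z')
           \<le> (2 * K / A\<^sup>2 * norm Y + 2 * K * (1 / A + B / A\<^sup>2) * N + o_coef_bound A B) * norm (Z - Z')"
proof -
  define d where "d = norm (Z - Z')"
  let ?a = "lam_min (Y ** matrix_inv Z)" and ?b = "lam_max (Y ** matrix_inv Z)"
  let ?a' = "lam_min (Y ** matrix_inv Z')" and ?b' = "lam_max (Y ** matrix_inv Z')"
  have "C > 0"
    using qform_between_le[OF qZ] c by simp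
  with A have "cy > 0"
    by (metis order_less_le_trans zero_less_divide_iff not_less_iff_gr_or_eq)
  then have K: "K \<ge> 0"
    using qform_between_le[OF qY] by (simp add: K_def)
  have ev: "A \<le> ?a" "?a \<le> ?b" "?b \<le> B" "A \<le> ?a'" "?a' \<le> ?b'" "?b' \<le> B"
    using lam_bounds[OF Z Y qZ qY c] lam_bounds[OF Z' Y qZ' qY c] A B
      lam_min_pos_le_lam_max[OF Z Y] lam_min_pos_le_lam_max[OF Z' Y] by auto
  have da: "\<bar>?a - ?a'\<bar> \<le> K * d" and db: "\<bar>?b - ?b'\<bar> \<le> K * d"
    using lam_min_lipschitz[OF Z Z' Y qZ qZ' qY c] lam_max_lipschitz[OF Z Z' Y qZ qZ' qY c]
    by (simp_all add: K_def d_def)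
  define M where "M = inv_log_mean ?a ?b"
  define M' where "M' = inv_log_mean ?a' ?b'"
  have coef: "m_coef Y Z = M" "m_coef Y Z' = M'" "o_coef Y Z = ln ?a - ?a * M" "o_coef Y Z' = ln ?a' - ?a' * M'"
    using m_coef_o_coef_eq[OF Z Y] m_coef_o_coef_eq[OF Z' Y] by (simp_all add: M_def M'_def)
  have dM: "\<bar>M - M'\<bar> \<le> 2 * K * d / A\<^sup>2"
  proof -
    have "\<bar>M - M'\<bar> \<le> (\<bar>?a - ?a'\<bar> + \<bar>?b - ?b'\<bar>) / A\<^sup>2"
      unfolding M_def M'_def using ev A by (intro inv_log_mean_lipschitz) auto
    also have "\<dots> \<le> (K * d + K * d) / A\<^sup>2"
      using da db by (intro divide_right_mono add_mono) auto
    finally show ?thesis by simp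
  qed
  have M: "\<bar>M\<bar> \<le> 1 / A"
    unfolding M_def using ev A by (intro abs_inv_log_mean_le) auto
  have dln: "\<bar>ln ?a - ln ?a'\<bar> \<le> K * d / A"
    using ln_lipschitz[of A ?a ?a'] A ev divide_right_mono[OF da, of A] by simp
  have "\<bar>o_coef Y Z - o_coef Y Z'\<bar> \<le> \<bar>ln ?a - ln ?a'\<bar> + \<bar>?a - ?a'\<bar> * \<bar>M\<bar> + \<bar>?a'\<bar> * \<bar>M - M'\<bar>"
  proof -
    have "o_coef Y Z - o_coef Y Z' = (ln ?a - ln ?a') - (?a - ?a') * M - ?a' * (M - M')"
      unfolding coef by (simp add: algebra_simps)
    then show ?thesis
      using abs_triangle_ineq4[of "(ln ?a - ln ?a') - (?a - ?a') * M" "?a' * (M - M')"]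
        abs_triangle_ineq4[of "ln ?a - ln ?a'" "(?a - ?a') * M"]
      by (simp add: abs_mult)
  qed
  also have "\<dots> \<le> K * d / A + K * d * (1 / A) + B * (2 * K * d / A\<^sup>2)"
    using dln da M dM ev A by (intro add_mono mult_mono) auto
  also have "\<dots> = 2 * K * (1 / A + B / A\<^sup>2) * d"
    by (simp add: algebra_simps)
  finally have dO: "\<bar>o_coef Y Z - o_coef Y Z'\<bar> \<le> 2 * K * (1 / A + B / A\<^sup>2) * d" .
  have "geodesic_velocity Y Z - geodesic_velocity Y Z'
      = (M - M') *\<^sub>R Y + (o_coef Y Z - o_coef Y Z') *\<^sub>R Z + o_coef Y Z' *\<^sub>R (Z - Z')"
    unfolding geodesic_velocity_def coef(1,2) by (simp add: algebra_simps)
  also have "norm \<dots> \<le> \<bar>M - M'\<bar> * norm Y + \<bar>o_coef Y Z - o_coef Y Z'\<bar> * norm Z + \<bar>o_coef Y Z'\<bar> * d"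
    using norm_triangle_ineq[of "(M - M') *\<^sub>R Y" "(o_coef Y Z - o_coef Y Z') *\<^sub>R Z"]
      norm_triangle_ineq[of "(M - M') *\<^sub>R Y + (o_coef Y Z - o_coef Y Z') *\<^sub>R Z" "o_coef Y Z' *\<^sub>R (Z - Z')"]
    by (simp add: d_def)
  also have "\<dots> \<le> 2 * K * d / A\<^sup>2 * norm Y + 2 * K * (1 / A + B / A\<^sup>2) * d * N + o_coef_bound A B * d"
    using dM dO N K A ev abs_m_coef_o_coef_le(2)[OF Z' Y A(1) ev(4,6)]
    by (intro add_mono mult_mono) (auto simp: d_def)
  finally show ?thesis
    by (simp add: d_def algebra_simps)
qed

section \<open>Uniform estimates on compact sets\<close>

lemma qform_eq_sum: "qform X v = (\<Sum>i\<in>UNIV. v $ i * (\<Sum>j\<in>UNIV. X $ i $ j * v $ j))"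
  by (simp add: qform_def inner_vec_def matrix_vector_mult_def)

lemma compact_spd_uniform_bounds:
  fixes KK :: "(real^'n::finite^'n) set"
  assumes KK: "compact KK" "KK \<subseteq> {A. spd A}"
  obtains c C R where "c > 0" "C > 0" "R \<ge> 0" "\<And>X. X \<in> KK \<Longrightarrow> qform_between c C X \<and> norm X \<le> R"
proof -
  obtain R0 where R0: "\<And>X. X \<in> KK \<Longrightarrow> norm X \<le> R0"
    using compact_imp_bounded[OF KK(1)] unfolding bounded_iff by blast
  define R where "R = max R0 0"
  have R: "R \<ge> 0" "\<And>X. X \<in> KK \<Longrightarrow> norm X \<le> R"
    using R0 by (force simp: R_def)+
  have "\<exists>c>0. \<forall>X\<in>KK. \<forall>v. c * (norm v)\<^sup>2 \<le> qform X v"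
  proof (cases "KK = {}")
    case False
    let ?S = "KK \<times> sphere (0::real^'n) 1"
    have "continuous_on ?S (\<lambda>(X, v). qform X v)"
      unfolding qform_eq_sum case_prod_unfold by (intro continuous_intros)
    moreover have "compact ?S" "?S \<noteq> {}"
      using KK False by (auto intro: compact_Times)
    ultimately have "\<exists>p\<in>?S. \<forall>q\<in>?S. (\<lambda>(X, v). qform X v) p \<le> (\<lambda>(X, v). qform X v) q"
      by (intro continuous_attains_inf)
    then obtain X0 u0 where X0: "X0 \<in> KK" "u0 \<in> sphere 0 1"
      and min: "\<And>X v. X \<in> KK \<Longrightarrow> v \<in> sphere 0 1 \<Longrightarrow> qform X0 u0 \<le> qform X v"
      by fastforce
    define c where "c = qform X0 u0"
    have "c > 0"
      using X0 KK(2) unfolding c_def by (intro spd_qform_pos) auto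
    moreover have "c * (norm v)\<^sup>2 \<le> qform X v" if "X \<in> KK" for X v
    proof (cases "v = 0")
      case False
      have "c \<le> qform X ((1 / norm v) *\<^sub>R v)"
        using min[of X "(1 / norm v) *\<^sub>R v"] that False by (simp add: c_def)
      then show ?thesis
        using False by (simp add: qform_scaleR_vector field_simps)
    qed simp
    ultimately show ?thesis by blast
  qed (auto intro: exI[of _ 1])
  then obtain c where c: "c > 0" "\<And>X v. X \<in> KK \<Longrightarrow> c * (norm v)\<^sup>2 \<le> qform X v"
    by blast
  define C where "C = real CARD('n) * R + 1"
  have "qform X v \<le> C * (norm v)\<^sup>2" if "X \<in> KK" for X v
  proof -
    have "qform X v \<le> real CARD('n) * norm X * (norm v)\<^sup>2"
      using abs_qform_le[of X v] by simp
    also have "\<dots> \<le> C * (norm v)\<^sup>2"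
    proof (rule mult_right_mono)
      have "real CARD('n) * norm X \<le> real CARD('n) * R"
        using R(2)[OF that] by (rule mult_left_mono) simp
      then show "real CARD('n) * norm X \<le> C"
        unfolding C_def by linarith
    qed simp
    finally show ?thesis .
  qed
  then show thesis
    using c R by (intro that[of c C R]) (auto simp: qform_between_def C_def add_nonneg_pos)
qed

lemma norm_thompson_geo_diff_le:
  fixes Y Z :: "real^'n::finite^'n"
  assumes Z: "spd Z" and Y: "spd Y" and t: "0 \<le> t" "t \<le> 1"
    and A: "0 < A" "A \<le> lam_min (Y ** matrix_inv Z)" and B: "lam_max (Y ** matrix_inv Z) \<le> B"
  shows "norm (thompson_geo Z t Y - Z)
           \<le> t * (norm Y / A + o_coef_bound A B * norm Z + geo_rem_const A B * (norm Y + norm Z))"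
proof -
  have B0: "B \<ge> 0"
    using lam_min_pos_le_lam_max[OF Z Y] A B by linarith
  have "t\<^sup>2 \<le> t"
    using t by (simp add: power2_eq_square mult_left_le_one_le)
  then have "geo_rem_const A B * t\<^sup>2 * (norm Y + norm Z) \<le> geo_rem_const A B * t * (norm Y + norm Z)"
    using geo_rem_const_nonneg[OF A(1) B0] by (intro mult_right_mono mult_left_mono) auto
  then have rem: "geo_rem_const A B * t\<^sup>2 * (norm Y + norm Z) \<le> t * (geo_rem_const A B * (norm Y + norm Z))"
    by (simp add: mult_ac)
  have "norm (thompson_geo Z t Y - Z)
      \<le> norm (thompson_geo Z t Y - Z - t *\<^sub>R geodesic_velocity Y Z) + norm (t *\<^sub>R geodesic_velocity Y Z)"
    using norm_triangle_ineq[of "thompson_geo Z t Y - Z - t *\<^sub>R geodesic_velocity Y Z" "t *\<^sub>R geodesic_velocity Y Z"]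
    by simp
  also have "\<dots> \<le> t * (geo_rem_const A B * (norm Y + norm Z)) + t * (norm Y / A + o_coef_bound A B * norm Z)"
    using thompson_geo_second_order[OF Z Y t A B] norm_geodesic_velocity_le[OF Z Y A B] rem t
    by (intro add_mono) (auto intro: mult_left_mono)
  finally show ?thesis
    by (simp add: algebra_simps)
qed

definition spd_box :: "real \<Rightarrow> real \<Rightarrow> real \<Rightarrow> (real^'n::finite^'n) set" where
  "spd_box c C N = {Z. spd Z \<and> qform_between c C Z \<and> norm Z \<le> N}"

lemma geodesic_uniform_estimates:
  fixes c C N cy Cy Ny :: real
  assumes c: "0 < c" "c \<le> C" and cy: "0 < cy" "cy \<le> Cy" and N: "0 \<le> N" "0 \<le> Ny"
  obtains M L \<rho> where "M \<ge> 0" "L \<ge> 0" "\<rho> \<ge> 0"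
    and "\<And>Y Z :: real^'n::finite^'n. Y \<in> spd_box cy Cy Ny \<Longrightarrow> Z \<in> spd_box c C N \<Longrightarrow>
           norm (geodesic_velocity Y Z) \<le> M"
    and "\<And>Y Z Z' :: real^'n^'n. Y \<in> spd_box cy Cy Ny \<Longrightarrow> Z \<in> spd_box c C N \<Longrightarrow> Z' \<in> spd_box c C N \<Longrightarrow>
           norm (geodesic_velocity Y Z - geodesic_velocity Y Z') \<le> L * norm (Z - Z')"
    and "\<And>Y Z :: real^'n^'n. \<And>t. Y \<in> spd_box cy Cy Ny \<Longrightarrow> Z \<in> spd_box c C N \<Longrightarrow> 0 \<le> t \<Longrightarrow> t \<le> 1 \<Longrightarrow>
           norm (thompson_geo Z t Y - Z - t *\<^sub>R geodesic_velocity Y Z) \<le> \<rho> * t\<^sup>2"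
proof -
  define A where "A = cy / C"
  define B where "B = Cy / c"
  define K where "K = Cy * real CARD('n) / c\<^sup>2"
  have AB: "A > 0" "B > 0" "K \<ge> 0"
    using c cy by (simp_all add: A_def B_def K_def)
  have Lc: "o_coef_bound A B \<ge> 0" and Rc: "geo_rem_const A B \<ge> 0"
    using AB by (simp_all add: o_coef_bound_def geo_rem_const_nonneg)
  have ev: "A \<le> lam_min (Y ** matrix_inv Z)" "lam_max (Y ** matrix_inv Z) \<le> B"
    if "Y \<in> spd_box cy Cy Ny" "Z \<in> spd_box c C N" for Y Z :: "real^'n^'n"
    using that lam_bounds[of Z Y c C cy Cy] c by (auto simp: spd_box_def A_def B_def)
  show thesis
  proof (rule that[of "Ny / A + o_coef_bound A B * N"
        "2 * K / A\<^sup>2 * Ny + 2 * K * (1 / A + B / A\<^sup>2) * N + o_coef_bound A B"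
        "geo_rem_const A B * (Ny + N)"])
    show "0 \<le> Ny / A + o_coef_bound A B * N" "0 \<le> geo_rem_const A B * (Ny + N)"
      "0 \<le> 2 * K / A\<^sup>2 * Ny + 2 * K * (1 / A + B / A\<^sup>2) * N + o_coef_bound A B"
      using AB Lc Rc N by simp_all
  next
    fix Y Z :: "real^'n^'n"
    assume YZ: "Y \<in> spd_box cy Cy Ny" "Z \<in> spd_box c C N"
    have "norm (geodesic_velocity Y Z) \<le> norm Y / A + o_coef_bound A B * norm Z"
      using YZ ev[OF YZ] AB by (intro norm_geodesic_velocity_le) (auto simp: spd_box_def)
    also have "\<dots> \<le> Ny / A + o_coef_bound A B * N"
      using YZ AB Lc by (intro add_mono divide_right_mono mult_left_mono) (auto simp: spd_box_def)
    finally show "norm (geodesic_velocity Y Z) \<le> Ny / A + o_coef_bound A B * N" .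
    fix t :: real
    assume t: "0 \<le> t" "t \<le> 1"
    have "norm (thompson_geo Z t Y - Z - t *\<^sub>R geodesic_velocity Y Z) \<le> geo_rem_const A B * t\<^sup>2 * (norm Y + norm Z)"
      using YZ ev[OF YZ] AB t by (intro thompson_geo_second_order) (auto simp: spd_box_def)
    also have "\<dots> \<le> geo_rem_const A B * t\<^sup>2 * (Ny + N)"
      using YZ Rc by (intro mult_left_mono add_mono) (auto simp: spd_box_def)
    also have "\<dots> = geo_rem_const A B * (Ny + N) * t\<^sup>2"
      by (simp add: mult_ac)
    finally show "norm (thompson_geo Z t Y - Z - t *\<^sub>R geodesic_velocity Y Z) \<le> geo_rem_const A B * (Ny + N) * t\<^sup>2" .
  next
    fix Y Z Z' :: "real^'n^'n"
    assume YZ: "Y \<in> spd_box cy Cy Ny" "Z \<in> spd_box c C N" "Z' \<in> spd_box c C N"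
    have "norm (geodesic_velocity Y Z - geodesic_velocity Y Z')
        \<le> (2 * K / A\<^sup>2 * norm Y + 2 * K * (1 / A + B / A\<^sup>2) * N + o_coef_bound A B) * norm (Z - Z')"
      using YZ c AB unfolding K_def
      by (intro geodesic_velocity_lipschitz) (auto simp: spd_box_def A_def B_def)
    also have "\<dots> \<le> (2 * K / A\<^sup>2 * Ny + 2 * K * (1 / A + B / A\<^sup>2) * N + o_coef_bound A B) * norm (Z - Z')"
      using YZ AB by (intro mult_right_mono add_mono mult_left_mono) (auto simp: spd_box_def)
    finally show "norm (geodesic_velocity Y Z - geodesic_velocity Y Z')
        \<le> (2 * K / A\<^sup>2 * Ny + 2 * K * (1 / A + B / A\<^sup>2) * N + o_coef_bound A B) * norm (Z - Z')" .
  qed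
qed

lemma norm_thompson_geo_diff_le_box:
  fixes Y Z :: "real^'n::finite^'n"
  assumes Z: "Z \<in> spd_box c C N" and Y: "Y \<in> spd_box cy Cy Ny" and c: "0 < c"
    and A: "0 < A" "A \<le> cy / C" and B: "Cy / c \<le> B" and t: "0 \<le> t" "t \<le> 1"
  shows "norm (thompson_geo Z t Y - Z) \<le> t * (Ny / A + o_coef_bound A B * N + geo_rem_const A B * (Ny + N))"
proof -
  have Zb: "spd Z" "qform_between c C Z" "norm Z \<le> N" and Yb: "spd Y" "qform_between cy Cy Y" "norm Y \<le> Ny"
    using Z Y by (auto simp: spd_box_def)
  have ev: "A \<le> lam_min (Y ** matrix_inv Z)" "lam_max (Y ** matrix_inv Z) \<le> B"
    using lam_bounds[OF Zb(1) Yb(1) Zb(2) Yb(2) c] A B by linarith+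
  then have B0: "0 \<le> B"
    using lam_min_pos_le_lam_max[OF Zb(1) Yb(1)] by linarith
  have "norm (thompson_geo Z t Y - Z)
      \<le> t * (norm Y / A + o_coef_bound A B * norm Z + geo_rem_const A B * (norm Y + norm Z))"
    by (rule norm_thompson_geo_diff_le[OF Zb(1) Yb(1) t A(1) ev])
  also have "\<dots> \<le> t * (Ny / A + o_coef_bound A B * N + geo_rem_const A B * (Ny + N))"
    using Zb Yb A B0 t geo_rem_const_nonneg[OF A(1) B0]
    by (intro mult_left_mono add_mono divide_right_mono) (auto simp: o_coef_bound_def)
  finally show ?thesis .
qed

section \<open>Sweeps\<close>

primrec geo_chain :: "(nat \<Rightarrow> real^'n::finite^'n) \<Rightarrow> (nat \<Rightarrow> real) \<Rightarrow> real^'n^'n \<Rightarrow> nat \<Rightarrow> real^'n^'n" where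
  "geo_chain W t X 0 = X"
| "geo_chain W t X (Suc l) = thompson_geo (geo_chain W t X l) (t l) (W l)"

lemma jidx_offset:
  assumes "l < k"
  shows "jidx k (p * k + l + 1) = l + 1"
proof -
  have "(p * k + l + 1) mod k = (l + 1) mod k"
    by (simp add: mod_add_left_eq[symmetric] add.assoc)
  moreover have "l + 1 < k \<or> l + 1 = k"
    using assms by auto
  ultimately show ?thesis
    by (auto simp: jidx_def)
qed

lemma T_map_eq_geo_chain:
  "T_map Y k p X = geo_chain (\<lambda>l. Y (Suc l)) (\<lambda>l. 1 / (real (p * k + l + 1) + 1)) X k"
proof -
  have "fold (S_map Y k) [p * k + 1 ..< p * k + l + 1] X
      = geo_chain (\<lambda>l. Y (Suc l)) (\<lambda>l. 1 / (real (p * k + l + 1) + 1)) X l" if "l \<le> k" for l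
    using that
  proof (induction l)
    case (Suc l)
    have "[p * k + 1 ..< p * k + Suc l + 1] = [p * k + 1 ..< p * k + l + 1] @ [p * k + l + 1]"
      by simp
    then show ?case
      using Suc jidx_offset[of l k p] by (simp add: S_map_def)
  qed simp
  then show ?thesis
    by (simp add: T_map_def algebra_simps)
qed

lemma spd_box_mono: "c' \<le> c \<Longrightarrow> C \<le> C' \<Longrightarrow> N \<le> N' \<Longrightarrow> spd_box c C N \<subseteq> spd_box c' C' N'"
  by (auto simp: spd_box_def intro: qform_between_mono)

primrec qform_bounds_iter :: "real \<Rightarrow> real \<Rightarrow> real \<Rightarrow> real \<Rightarrow> nat \<Rightarrow> real \<times> real" where
  "qform_bounds_iter cy Cy c C 0 = (c, C)"
| "qform_bounds_iter cy Cy c C (Suc l) =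
     (fst (qform_bounds_iter cy Cy c C l) * min 1 (cy / snd (qform_bounds_iter cy Cy c C l)),
      snd (qform_bounds_iter cy Cy c C l) * max 1 (Cy / fst (qform_bounds_iter cy Cy c C l)))"

lemma qform_bounds_iter_pos:
  assumes "0 < cy" "0 < c" "0 < C"
  shows "0 < fst (qform_bounds_iter cy Cy c C l) \<and> 0 < snd (qform_bounds_iter cy Cy c C l)"
  using assms by (induction l) auto

lemma qform_bounds_iter_mono:
  assumes "0 < cy" "0 < c" "0 < C" "l \<le> m"
  shows "fst (qform_bounds_iter cy Cy c C m) \<le> fst (qform_bounds_iter cy Cy c C l)"
    and "snd (qform_bounds_iter cy Cy c C l) \<le> snd (qform_bounds_iter cy Cy c C m)"
proof -
  note pos = qform_bounds_iter_pos[OF assms(1-3)]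
  have "decseq (\<lambda>l. fst (qform_bounds_iter cy Cy c C l))"
    using pos by (intro decseq_SucI) (simp add: mult_left_le)
  then show "fst (qform_bounds_iter cy Cy c C m) \<le> fst (qform_bounds_iter cy Cy c C l)"
    using assms(4) by (simp add: decseq_def)
  have "incseq (\<lambda>l. snd (qform_bounds_iter cy Cy c C l))"
  proof (rule incseq_SucI)
    fix n
    have "0 < snd (qform_bounds_iter cy Cy c C n)"
      using pos by blast
    then show "snd (qform_bounds_iter cy Cy c C n) \<le> snd (qform_bounds_iter cy Cy c C (Suc n))"
      by (simp add: mult_le_cancel_left1)
  qed
  then show "snd (qform_bounds_iter cy Cy c C l) \<le> snd (qform_bounds_iter cy Cy c C m)"
    using assms(4) by (simp add: incseq_def)
qed

primrec norm_bound_iter :: "real \<Rightarrow> real \<Rightarrow> real \<Rightarrow> nat \<Rightarrow> real" where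
  "norm_bound_iter R \<alpha> \<beta> 0 = R"
| "norm_bound_iter R \<alpha> \<beta> (Suc l) = \<alpha> + (1 + \<beta>) * norm_bound_iter R \<alpha> \<beta> l"

lemma norm_bound_iter_nonneg_mono:
  assumes "0 \<le> R" "0 \<le> \<alpha>" "0 \<le> \<beta>"
  shows "0 \<le> norm_bound_iter R \<alpha> \<beta> l" and "l \<le> m \<Longrightarrow> norm_bound_iter R \<alpha> \<beta> l \<le> norm_bound_iter R \<alpha> \<beta> m"
proof -
  have nonneg: "0 \<le> norm_bound_iter R \<alpha> \<beta> n" for n
    using assms by (induction n) auto
  then show "0 \<le> norm_bound_iter R \<alpha> \<beta> l" .
  have "incseq (norm_bound_iter R \<alpha> \<beta>)"
    using nonneg assms by (intro incseq_SucI) (simp add: algebra_simps)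
  then show "l \<le> m \<Longrightarrow> norm_bound_iter R \<alpha> \<beta> l \<le> norm_bound_iter R \<alpha> \<beta> m"
    by (simp add: incseq_def)
qed

lemma geo_chain_bounds:
  fixes k :: nat and c0 C0 R cy Cy Ny :: real
  assumes pos: "0 < c0" "0 < C0" "0 \<le> R" "0 < cy" "0 < Cy" "0 \<le> Ny" and "c0 \<le> C0"
  obtains c C N D where "0 < c" "c \<le> C" "0 \<le> N" "0 \<le> D"
    and "\<And>(W :: nat \<Rightarrow> real^'n::finite^'n) t X \<tau> l.
           (\<And>i. i < k \<Longrightarrow> W i \<in> spd_box cy Cy Ny) \<Longrightarrow> (\<And>i. i < k \<Longrightarrow> 0 \<le> t i \<and> t i \<le> \<tau>) \<Longrightarrow>
           \<tau> \<le> 1 \<Longrightarrow> X \<in> spd_box c0 C0 R \<Longrightarrow> l \<le> k \<Longrightarrow>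
           geo_chain W t X l \<in> spd_box c C N \<and> norm (geo_chain W t X l - X) \<le> real l * \<tau> * D"
proof -
  define cs where "cs l = fst (qform_bounds_iter cy Cy c0 C0 l)" for l
  define Cs where "Cs l = snd (qform_bounds_iter cy Cy c0 C0 l)" for l
  have cs_pos: "0 < cs l" "0 < Cs l" for l
    using qform_bounds_iter_pos[of cy c0 C0 Cy l] pos by (simp_all add: cs_def Cs_def)
  have cs_mono: "cs k \<le> cs l" "Cs l \<le> Cs k" if "l \<le> k" for l
    using qform_bounds_iter_mono[of cy c0 C0 l k Cy] pos that by (simp_all add: cs_def Cs_def)
  define A where "A = cy / Cs k"
  define B where "B = Cy / cs k"
  have A: "0 < A" "A \<le> cy / Cs l" and B: "0 < B" "Cy / cs l \<le> B" if "l \<le> k" for l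
    using cs_pos cs_mono[OF that] pos unfolding A_def B_def by (auto intro: divide_left_mono)
  define \<alpha> where "\<alpha> = Ny / A + geo_rem_const A B * Ny"
  define \<beta> where "\<beta> = o_coef_bound A B + geo_rem_const A B"
  have \<alpha>\<beta>: "0 \<le> \<alpha>" "0 \<le> \<beta>"
    using A[of k] B[of k] pos geo_rem_const_nonneg[of A B]
    by (simp_all add: \<alpha>_def \<beta>_def o_coef_bound_def)
  define Ns where "Ns = norm_bound_iter R \<alpha> \<beta>"
  define N where "N = Ns k"
  have Ns: "0 \<le> Ns l" "l \<le> k \<Longrightarrow> Ns l \<le> N" for l
    using norm_bound_iter_nonneg_mono[OF pos(3) \<alpha>\<beta>] by (simp_all add: Ns_def N_def)
  have N0: "0 \<le> N"
    using Ns(1) by (simp add: N_def)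
  define D where "D = \<alpha> + \<beta> * N"
  have D: "0 \<le> D" "\<alpha> + \<beta> * Ns l \<le> D" if "l \<le> k" for l
    using \<alpha>\<beta> Ns N0 that by (simp_all add: D_def mult_left_mono)
  have chain: "geo_chain W t X l \<in> spd_box (cs l) (Cs l) (Ns l) \<and> norm (geo_chain W t X l - X) \<le> real l * \<tau> * D"
    if W: "\<And>i. i < k \<Longrightarrow> W i \<in> spd_box cy Cy Ny" and t: "\<And>i. i < k \<Longrightarrow> 0 \<le> t i \<and> t i \<le> \<tau>"
      and \<tau>: "\<tau> \<le> 1" and X: "X \<in> spd_box c0 C0 R" and "l \<le> k"
    for W :: "nat \<Rightarrow> real^'n^'n" and t X \<tau> l
    using \<open>l \<le> k\<close>
  proof (induction l)
    case 0
    then show ?case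
      using X by (simp add: cs_def Cs_def Ns_def)
  next
    case (Suc l)
    let ?Z = "geo_chain W t X l"
    have l: "l < k" "l \<le> k"
      using Suc.prems by auto
    have Z: "?Z \<in> spd_box (cs l) (Cs l) (Ns l)" and dZ: "norm (?Z - X) \<le> real l * \<tau> * D"
      using Suc.IH l by auto
    have Wl: "W l \<in> spd_box cy Cy Ny" and tl: "0 \<le> t l" "t l \<le> \<tau>" "t l \<le> 1"
      using W[OF l(1)] t[OF l(1)] \<tau> by auto
    have step: "norm (geo_chain W t X (Suc l) - ?Z) \<le> t l * (\<alpha> + \<beta> * Ns l)"
      using norm_thompson_geo_diff_le_box[OF Z Wl cs_pos(1) A(1,2)[OF l(2)] B(2)[OF l(2)] tl(1,3)]
      by (simp add: \<alpha>_def \<beta>_def algebra_simps)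
    have "0 \<le> \<alpha> + \<beta> * Ns l"
      using \<alpha>\<beta> Ns by simp
    then have "t l * (\<alpha> + \<beta> * Ns l) \<le> \<alpha> + \<beta> * Ns l" and "t l * (\<alpha> + \<beta> * Ns l) \<le> \<tau> * D"
      using tl D(2)[OF l(2)] D(1) by (auto intro: mult_left_le_one_le mult_mono)
    with step have "norm (geo_chain W t X (Suc l)) \<le> Ns (Suc l)"
      and "norm (geo_chain W t X (Suc l) - X) \<le> real (Suc l) * \<tau> * D"
      using Z dZ norm_triangle_ineq[of "geo_chain W t X (Suc l) - ?Z" ?Z]
        norm_triangle_ineq[of "geo_chain W t X (Suc l) - ?Z" "?Z - X"]
      by (auto simp: spd_box_def Ns_def algebra_simps)
    moreover have "spd (geo_chain W t X (Suc l))"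
      and "qform_between (cs (Suc l)) (Cs (Suc l)) (geo_chain W t X (Suc l))"
      using thompson_geo_spd_bounds[of ?Z "W l" "cs l" "Cs l" cy Cy "t l"] Z Wl cs_pos pos tl
      by (auto simp: spd_box_def cs_def Cs_def)
    ultimately show ?case
      by (simp add: spd_box_def)
  qed
  show thesis
  proof (rule that[of "cs k" "Cs k" N D])
    show "0 < cs k" "cs k \<le> Cs k" "0 \<le> N" "0 \<le> D"
      using cs_pos[of k] cs_mono[of 0] N0 D(1) \<open>c0 \<le> C0\<close> by (auto simp: cs_def Cs_def)
  next
    fix W :: "nat \<Rightarrow> real^'n^'n" and t :: "nat \<Rightarrow> real" and X :: "real^'n^'n" and \<tau> l
    assume W: "\<And>i. i < k \<Longrightarrow> W i \<in> spd_box cy Cy Ny" and t: "\<And>i. i < k \<Longrightarrow> 0 \<le> t i \<and> t i \<le> \<tau>"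
      and \<tau>: "\<tau> \<le> 1" and X: "X \<in> spd_box c0 C0 R" and l: "l \<le> k"
    then have "geo_chain W t X l \<in> spd_box (cs l) (Cs l) (Ns l)"
      and "norm (geo_chain W t X l - X) \<le> real l * \<tau> * D"
      using chain by blast+
    moreover have "spd_box (cs l) (Cs l) (Ns l) \<subseteq> spd_box (cs k) (Cs k) N"
      using cs_mono[OF l] Ns(2)[OF l] by (rule spd_box_mono)
    ultimately show "geo_chain W t X l \<in> spd_box (cs k) (Cs k) N \<and> norm (geo_chain W t X l - X) \<le> real l * \<tau> * D"
      by blast
  qed
qed

lemma sweep_estimate:
  fixes x :: "nat \<Rightarrow> 'a::real_normed_vector" and G :: "nat \<Rightarrow> 'a \<Rightarrow> 'a"
  assumes step: "\<And>l. l < k \<Longrightarrow> norm (x (Suc l) - x l - t l *\<^sub>R G l (x l)) \<le> \<rho>"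
    and t: "\<And>l. l < k \<Longrightarrow> 0 \<le> t l \<and> t l \<le> \<tau> \<and> \<bar>t l - s\<bar> \<le> \<sigma>"
    and bound: "\<And>l. l < k \<Longrightarrow> norm (G l (x 0)) \<le> M"
    and lip: "\<And>l. l < k \<Longrightarrow> norm (G l (x l) - G l (x 0)) \<le> \<Lambda>"
  shows "norm (x k - x 0 - s *\<^sub>R (\<Sum>l<k. G l (x 0))) \<le> real k * (\<rho> + \<sigma> * M + \<tau> * \<Lambda>)"
proof -
  define e where "e l = (x (Suc l) - x l - t l *\<^sub>R G l (x l)) + (t l - s) *\<^sub>R G l (x 0)
      + t l *\<^sub>R (G l (x l) - G l (x 0))" for l
  have "e l = (x (Suc l) - x l) - s *\<^sub>R G l (x 0)" for l
    by (simp add: e_def algebra_simps)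
  then have "(\<Sum>l<k. e l) = (\<Sum>l<k. x (Suc l) - x l) - s *\<^sub>R (\<Sum>l<k. G l (x 0))"
    by (simp only: sum_subtractf scaleR_sum_right)
  then have "x k - x 0 - s *\<^sub>R (\<Sum>l<k. G l (x 0)) = (\<Sum>l<k. e l)"
    by (simp add: sum_lessThan_telescope)
  also have "norm \<dots> \<le> (\<Sum>l<k. \<rho> + \<sigma> * M + \<tau> * \<Lambda>)"
  proof (rule order_trans[OF norm_sum sum_mono])
    fix l assume "l \<in> {..<k}"
    then have l: "l < k" by simp
    let ?a = "x (Suc l) - x l - t l *\<^sub>R G l (x l)" and ?b = "(t l - s) *\<^sub>R G l (x 0)"
      and ?c = "t l *\<^sub>R (G l (x l) - G l (x 0))"
    have "norm (e l) \<le> norm ?a + norm ?b + norm ?c"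
      unfolding e_def using norm_triangle_ineq[of "?a + ?b" ?c] norm_triangle_ineq[of ?a ?b] by linarith
    also have "\<dots> = norm ?a + \<bar>t l - s\<bar> * norm (G l (x 0)) + \<bar>t l\<bar> * norm (G l (x l) - G l (x 0))"
      by simp
    also have "\<dots> \<le> \<rho> + \<sigma> * M + \<tau> * \<Lambda>"
      using step[OF l] t[OF l] bound[OF l] lip[OF l] by (intro add_mono mult_mono) auto
    finally show "norm (e l) \<le> \<rho> + \<sigma> * M + \<tau> * \<Lambda>" .
  qed
  finally show ?thesis by simp
qed

lemma T_map_step_sizes:
  fixes p k l :: nat
  assumes p: "p \<ge> 1" and l: "l < k"
  defines "t \<equiv> 1 / (real (p * k + l + 1) + 1)"
  shows "0 \<le> t" "t \<le> 1 / real p" "\<bar>t - 1 / (real p * real k)\<bar> \<le> (real k + 1) / (real p)\<^sup>2"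
proof -
  define q where "q = real p * real k"
  define u where "u = real (p * k + l + 1) + 1"
  have u: "u = q + real l + 2" and t: "t = 1 / u"
    by (simp_all add: u_def q_def t_def)
  have p1: "real p \<ge> 1" and pq: "real p \<le> q"
    using p l by (simp_all add: q_def)
  then have q0: "q > 0" and qu: "q \<le> u"
    using u by auto
  show "0 \<le> t"
    by (simp add: t_def)
  show "t \<le> 1 / real p"
    using t p1 pq qu by (simp add: frac_le)
  have "1 / q - 1 / u = (u - q) / (q * u)"
    using q0 qu by (simp add: field_simps)
  moreover have "1 / u \<le> 1 / q"
    using q0 qu by (simp add: frac_le)
  ultimately have "\<bar>t - 1 / q\<bar> = (u - q) / (q * u)"
    unfolding t by linarith
  also have "\<dots> \<le> (real k + 1) / (real p * real p)"
    using u l q0 qu pq p1 by (intro frac_le mult_mono) auto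
  finally show "\<bar>t - 1 / (real p * real k)\<bar> \<le> (real k + 1) / (real p)\<^sup>2"
    by (simp add: q_def power2_eq_square)
qed

lemma sweep_box_bounds:
  fixes Y :: "nat \<Rightarrow> real^'n::finite^'n" and KK :: "(real^'n^'n) set"
  assumes k: "k \<ge> 1" and Y: "\<And>j. j \<in> {1..k} \<Longrightarrow> spd (Y j)"
    and KK: "compact KK" "KK \<subseteq> {A. spd A}" "KK \<noteq> {}"
  obtains cy Cy Ny c C N D where "0 < cy" "cy \<le> Cy" "0 \<le> Ny" "0 < c" "c \<le> C" "0 \<le> N" "0 \<le> D"
    and "\<And>j. j \<in> {1..k} \<Longrightarrow> Y j \<in> spd_box cy Cy Ny"
    and "\<And>(W :: nat \<Rightarrow> real^'n^'n) t X \<tau> l.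
      (\<And>i. i < k \<Longrightarrow> W i \<in> spd_box cy Cy Ny) \<Longrightarrow> (\<And>i. i < k \<Longrightarrow> 0 \<le> t i \<and> t i \<le> \<tau>) \<Longrightarrow>
      \<tau> \<le> 1 \<Longrightarrow> X \<in> KK \<Longrightarrow> l \<le> k \<Longrightarrow>
      geo_chain W t X l \<in> spd_box c C N \<and> norm (geo_chain W t X l - X) \<le> real l * \<tau> * D"
proof -
  have Yset: "compact (Y ` {1..k})" "Y ` {1..k} \<subseteq> {A. spd A}"
    using Y by (auto intro: finite_imp_compact)
  obtain cy Cy Ny where cy: "0 < cy" "0 < Cy" "0 \<le> Ny"
    and "\<And>X. X \<in> Y ` {1..k} \<Longrightarrow> qform_between cy Cy X \<and> norm X \<le> Ny"
    using compact_spd_uniform_bounds[OF Yset] by blast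
  then have Ybox: "\<And>j. j \<in> {1..k} \<Longrightarrow> Y j \<in> spd_box cy Cy Ny"
    using Y by (simp add: spd_box_def)
  obtain c0 C0 R where c0: "0 < c0" "0 < C0" "0 \<le> R"
    and "\<And>X. X \<in> KK \<Longrightarrow> qform_between c0 C0 X \<and> norm X \<le> R"
    using compact_spd_uniform_bounds[OF KK(1,2)] by blast
  then have KKbox: "\<And>X. X \<in> KK \<Longrightarrow> X \<in> spd_box c0 C0 R"
    using KK(2) by (auto simp: spd_box_def)
  have "cy \<le> Cy" "c0 \<le> C0"
    using Ybox[of 1] k KK(3) KKbox qform_between_le by (auto simp: spd_box_def)
  then obtain c C N D where "0 < c" "c \<le> C" "0 \<le> N" "0 \<le> D"
    and "\<And>(W :: nat \<Rightarrow> real^'n^'n) t X \<tau> l.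
      (\<And>i. i < k \<Longrightarrow> W i \<in> spd_box cy Cy Ny) \<Longrightarrow> (\<And>i. i < k \<Longrightarrow> 0 \<le> t i \<and> t i \<le> \<tau>) \<Longrightarrow>
      \<tau> \<le> 1 \<Longrightarrow> X \<in> spd_box c0 C0 R \<Longrightarrow> l \<le> k \<Longrightarrow>
      geo_chain W t X l \<in> spd_box c C N \<and> norm (geo_chain W t X l - X) \<le> real l * \<tau> * D"
    using geo_chain_bounds[OF c0 cy] by blast
  with that[of cy Cy Ny c C N D] cy Ybox KKbox \<open>cy \<le> Cy\<close> show thesis
    by blast
qed

lemma geo_chain_first_order:
  fixes W :: "nat \<Rightarrow> real^'n::finite^'n"
  assumes W: "\<And>l. l < k \<Longrightarrow> W l \<in> spd_box cy Cy Ny"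
    and t: "\<And>l. l < k \<Longrightarrow> 0 \<le> t l \<and> t l \<le> \<tau> \<and> \<bar>t l - s\<bar> \<le> \<sigma>" and \<tau>: "\<tau> \<le> 1"
    and chain: "\<And>l. l \<le> k \<Longrightarrow> geo_chain W t X l \<in> spd_box c C N \<and> norm (geo_chain W t X l - X) \<le> \<delta>"
    and bound: "\<And>Y Z :: real^'n^'n. Y \<in> spd_box cy Cy Ny \<Longrightarrow> Z \<in> spd_box c C N \<Longrightarrow> norm (geodesic_velocity Y Z) \<le> M"
    and lip: "\<And>Y Z Z' :: real^'n^'n. Y \<in> spd_box cy Cy Ny \<Longrightarrow> Z \<in> spd_box c C N \<Longrightarrow> Z' \<in> spd_box c C N \<Longrightarrow>
      norm (geodesic_velocity Y Z - geodesic_velocity Y Z') \<le> L * norm (Z - Z')"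
    and rem: "\<And>(Y :: real^'n^'n) Z t. Y \<in> spd_box cy Cy Ny \<Longrightarrow> Z \<in> spd_box c C N \<Longrightarrow> 0 \<le> t \<Longrightarrow> t \<le> 1 \<Longrightarrow>
      norm (thompson_geo Z t Y - Z - t *\<^sub>R geodesic_velocity Y Z) \<le> \<rho> * t\<^sup>2"
    and nonneg: "0 \<le> L" "0 \<le> \<rho>"
  shows "norm (geo_chain W t X k - X - s *\<^sub>R (\<Sum>l<k. geodesic_velocity (W l) X))
           \<le> real k * (\<rho> * \<tau>\<^sup>2 + \<sigma> * M + \<tau> * (L * \<delta>))"
proof -
  let ?x = "geo_chain W t X"
  have "norm (?x k - ?x 0 - s *\<^sub>R (\<Sum>l<k. geodesic_velocity (W l) (?x 0)))
      \<le> real k * (\<rho> * \<tau>\<^sup>2 + \<sigma> * M + \<tau> * (L * \<delta>))"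
  proof (rule sweep_estimate)
    fix l assume l: "l < k"
    have box: "?x l \<in> spd_box c C N"
      using chain[of l] l by simp
    have "0 \<le> t l" "t l \<le> 1"
      using t[OF l] \<tau> by auto
    then have "norm (?x (Suc l) - ?x l - t l *\<^sub>R geodesic_velocity (W l) (?x l)) \<le> \<rho> * (t l)\<^sup>2"
      using rem[OF W[OF l] box] by simp
    also have "\<dots> \<le> \<rho> * \<tau>\<^sup>2"
      using t[OF l] nonneg by (intro mult_left_mono power_mono) auto
    finally show "norm (?x (Suc l) - ?x l - t l *\<^sub>R geodesic_velocity (W l) (?x l)) \<le> \<rho> * \<tau>\<^sup>2" .
    show "norm (geodesic_velocity (W l) (?x 0)) \<le> M"
      using bound[OF W[OF l]] chain[of 0] by simp
    have "norm (geodesic_velocity (W l) (?x l) - geodesic_velocity (W l) (?x 0)) \<le> L * norm (?x l - X)"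
      using lip[OF W[OF l]] chain[of l] chain[of 0] l by simp
    also have "\<dots> \<le> L * \<delta>"
      using chain[of l] l nonneg by (intro mult_left_mono) auto
    finally show "norm (geodesic_velocity (W l) (?x l) - geodesic_velocity (W l) (?x 0)) \<le> L * \<delta>" .
  qed (use t in auto)
  then show ?thesis by simp
qed

lemma T_map_first_order_expansion:
  fixes Y :: "nat \<Rightarrow> real^'n::finite^'n" and KK :: "(real^'n^'n) set"
  assumes "k \<ge> 1" "\<And>j. j \<in> {1..k} \<Longrightarrow> spd (Y j)" "compact KK" "KK \<subseteq> {A. spd A}" "KK \<noteq> {}"
  obtains CO where "CO \<ge> 0" "\<And>X p. X \<in> KK \<Longrightarrow> p \<ge> 1 \<Longrightarrow>
    norm (T_map Y k p X - X - (1 / (real p * real k)) *\<^sub>R (\<Sum>j=1..k. geodesic_velocity (Y j) X))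
      \<le> CO / (real p)\<^sup>2"
proof -
  obtain cy Cy Ny c C N D where const: "0 < cy" "cy \<le> Cy" "0 \<le> Ny" "0 < c" "c \<le> C" "0 \<le> N" "0 \<le> D"
    and Ybox: "\<And>j. j \<in> {1..k} \<Longrightarrow> Y j \<in> spd_box cy Cy Ny"
    and chain: "\<And>(W :: nat \<Rightarrow> real^'n^'n) t X \<tau> l.
      (\<And>i. i < k \<Longrightarrow> W i \<in> spd_box cy Cy Ny) \<Longrightarrow> (\<And>i. i < k \<Longrightarrow> 0 \<le> t i \<and> t i \<le> \<tau>) \<Longrightarrow>
      \<tau> \<le> 1 \<Longrightarrow> X \<in> KK \<Longrightarrow> l \<le> k \<Longrightarrow>
      geo_chain W t X l \<in> spd_box c C N \<and> norm (geo_chain W t X l - X) \<le> real l * \<tau> * D"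
    using sweep_box_bounds[where Y = Y and KK = KK, OF assms] by blast
  obtain M L \<rho> where MLr: "0 \<le> M" "0 \<le> L" "0 \<le> \<rho>"
    and estimates: "\<And>Y Z :: real^'n^'n. Y \<in> spd_box cy Cy Ny \<Longrightarrow> Z \<in> spd_box c C N \<Longrightarrow>
      norm (geodesic_velocity Y Z) \<le> M"
    "\<And>Y Z Z' :: real^'n^'n. Y \<in> spd_box cy Cy Ny \<Longrightarrow> Z \<in> spd_box c C N \<Longrightarrow> Z' \<in> spd_box c C N \<Longrightarrow>
      norm (geodesic_velocity Y Z - geodesic_velocity Y Z') \<le> L * norm (Z - Z')"
    "\<And>Y Z :: real^'n^'n. \<And>t. Y \<in> spd_box cy Cy Ny \<Longrightarrow> Z \<in> spd_box c C N \<Longrightarrow> 0 \<le> t \<Longrightarrow> t \<le> 1 \<Longrightarrow>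
      norm (thompson_geo Z t Y - Z - t *\<^sub>R geodesic_velocity Y Z) \<le> \<rho> * t\<^sup>2"
    using geodesic_uniform_estimates[OF const(4,5,1,2,6,3)] by blast
  show thesis
  proof (rule that[of "real k * (\<rho> + (real k + 1) * M + L * real k * D)"])
    show "0 \<le> real k * (\<rho> + (real k + 1) * M + L * real k * D)"
      using MLr const by simp
  next
    fix X and p :: nat
    assume X: "X \<in> KK" and p: "p \<ge> 1"
    define W where "W l = Y (Suc l)" for l
    define t where "t l = 1 / (real (p * k + l + 1) + 1)" for l
    have W: "W l \<in> spd_box cy Cy Ny" if "l < k" for l
      using Ybox that by (simp add: W_def)
    have t: "0 \<le> t l \<and> t l \<le> 1 / real p \<and> \<bar>t l - 1 / (real p * real k)\<bar> \<le> (real k + 1) / (real p)\<^sup>2"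
      if "l < k" for l
      using T_map_step_sizes[OF p that] by (simp add: t_def)
    have p1: "1 / real p \<le> 1"
      using p by simp
    have chain_X: "geo_chain W t X l \<in> spd_box c C N \<and> norm (geo_chain W t X l - X) \<le> real k * (1 / real p) * D"
      if "l \<le> k" for l
    proof -
      have "geo_chain W t X l \<in> spd_box c C N \<and> norm (geo_chain W t X l - X) \<le> real l * (1 / real p) * D"
        using W t X p1 that by (intro chain) auto
      moreover have "real l * (1 / real p) * D \<le> real k * (1 / real p) * D"
        using that const(7) by (intro mult_right_mono) auto
      ultimately show ?thesis by auto
    qed
    have "norm (geo_chain W t X k - X - (1 / (real p * real k)) *\<^sub>R (\<Sum>l<k. geodesic_velocity (W l) X))
        \<le> real k * (\<rho> * (1 / real p)\<^sup>2 + (real k + 1) / (real p)\<^sup>2 * M + 1 / real p * (L * (real k * (1 / real p) * D)))"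
      by (rule geo_chain_first_order[OF W t p1 chain_X estimates MLr(2,3)])
    moreover have "T_map Y k p X = geo_chain W t X k"
      unfolding W_def[abs_def] t_def[abs_def] by (rule T_map_eq_geo_chain)
    moreover have "(\<Sum>l<k. geodesic_velocity (W l) X) = (\<Sum>j=1..k. geodesic_velocity (Y j) X)"
      by (simp add: W_def sum.atLeast1_atMost_eq)
    moreover have "real k * (\<rho> * (1 / real p)\<^sup>2 + (real k + 1) / (real p)\<^sup>2 * M
        + 1 / real p * (L * (real k * (1 / real p) * D)))
        = real k * (\<rho> + (real k + 1) * M + L * real k * D) / (real p)\<^sup>2"
      using p by (simp add: power2_eq_square field_simps)
    ultimately show "norm (T_map Y k p X - X - (1 / (real p * real k)) *\<^sub>R (\<Sum>j=1..k. geodesic_velocity (Y j) X))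
        \<le> real k * (\<rho> + (real k + 1) * M + L * real k * D) / (real p)\<^sup>2"
      by simp
  qed
qed

lemma sum_geodesic_velocity_lipschitz:
  fixes Y :: "nat \<Rightarrow> real^'n::finite^'n" and KK :: "(real^'n^'n) set"
  assumes "k \<ge> 1" "\<And>j. j \<in> {1..k} \<Longrightarrow> spd (Y j)" "compact KK" "KK \<subseteq> {A. spd A}" "KK \<noteq> {}"
  obtains L where "L \<ge> 0" "\<And>X X'. X \<in> KK \<Longrightarrow> X' \<in> KK \<Longrightarrow>
    norm ((\<Sum>j=1..k. geodesic_velocity (Y j) X) - (\<Sum>j=1..k. geodesic_velocity (Y j) X')) \<le> L * norm (X - X')"
proof -
  obtain cy Cy Ny c C N D where const: "0 < cy" "cy \<le> Cy" "0 \<le> Ny" "0 < c" "c \<le> C" "0 \<le> N" "0 \<le> D"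
    and Ybox: "\<And>j. j \<in> {1..k} \<Longrightarrow> Y j \<in> spd_box cy Cy Ny"
    and chain: "\<And>(W :: nat \<Rightarrow> real^'n^'n) t X \<tau> l.
      (\<And>i. i < k \<Longrightarrow> W i \<in> spd_box cy Cy Ny) \<Longrightarrow> (\<And>i. i < k \<Longrightarrow> 0 \<le> t i \<and> t i \<le> \<tau>) \<Longrightarrow>
      \<tau> \<le> 1 \<Longrightarrow> X \<in> KK \<Longrightarrow> l \<le> k \<Longrightarrow>
      geo_chain W t X l \<in> spd_box c C N \<and> norm (geo_chain W t X l - X) \<le> real l * \<tau> * D"
    using sweep_box_bounds[where Y = Y and KK = KK, OF assms] by blast
  have KK_box: "X \<in> spd_box c C N" if "X \<in> KK" for X
  proof -
    have "\<And>i. i < k \<Longrightarrow> Y 1 \<in> spd_box cy Cy Ny"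
      using Ybox[of 1] assms(1) by simp
    then show ?thesis
      using chain[of "\<lambda>_. Y 1" "\<lambda>_. 0" 1 X 0] that by simp
  qed
  obtain M L \<rho> where "0 \<le> M" "0 \<le> L" "0 \<le> \<rho>"
    and "\<And>Y Z :: real^'n^'n. Y \<in> spd_box cy Cy Ny \<Longrightarrow> Z \<in> spd_box c C N \<Longrightarrow>
      norm (geodesic_velocity Y Z) \<le> M"
    and lip: "\<And>Y Z Z' :: real^'n^'n. Y \<in> spd_box cy Cy Ny \<Longrightarrow> Z \<in> spd_box c C N \<Longrightarrow>
      Z' \<in> spd_box c C N \<Longrightarrow> norm (geodesic_velocity Y Z - geodesic_velocity Y Z') \<le> L * norm (Z - Z')"
    and "\<And>Y Z :: real^'n^'n. \<And>t. Y \<in> spd_box cy Cy Ny \<Longrightarrow> Z \<in> spd_box c C N \<Longrightarrow> 0 \<le> t \<Longrightarrow> t \<le> 1 \<Longrightarrow>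
      norm (thompson_geo Z t Y - Z - t *\<^sub>R geodesic_velocity Y Z) \<le> \<rho> * t\<^sup>2"
    using geodesic_uniform_estimates[OF const(4,5,1,2,6,3)] by blast
  show thesis
  proof (rule that[of "real k * L"])
    fix X X' assume XX': "X \<in> KK" "X' \<in> KK"
    have "norm ((\<Sum>j=1..k. geodesic_velocity (Y j) X) - (\<Sum>j=1..k. geodesic_velocity (Y j) X'))
        \<le> (\<Sum>j=1..k. norm (geodesic_velocity (Y j) X - geodesic_velocity (Y j) X'))"
      by (simp add: sum_subtractf[symmetric] norm_sum)
    also have "\<dots> \<le> (\<Sum>j=1..k. L * norm (X - X'))"
      by (rule sum_mono, rule lip[OF Ybox KK_box[OF XX'(1)] KK_box[OF XX'(2)]])
    finally show "norm ((\<Sum>j=1..k. geodesic_velocity (Y j) X) - (\<Sum>j=1..k. geodesic_velocity (Y j) X'))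
        \<le> real k * L * norm (X - X')"
      by simp
  qed (use \<open>0 \<le> L\<close> in simp)
qed

theorem lemma4p5:
  fixes Y :: "nat \<Rightarrow> real^'n::finite^'n" and k :: nat
    and Xs :: "real^'n^'n" and KK :: "(real^'n^'n) set"
  assumes "k \<ge> 1"
    and "\<forall>j\<in>{1..k}. spd (Y j)"
    and "spd Xs"
    and "(\<Sum>j=1..k. m_coef (Y j) Xs *\<^sub>R Y j) + (\<Sum>j=1..k. o_coef (Y j) Xs) *\<^sub>R Xs = 0"
    and "compact KK" and "KK \<subseteq> {A. spd A}" and "Xs \<in> KK"
  shows "\<exists>CO CK. CO > 0 \<and> CK > 0 \<and>
           (\<forall>X\<in>KK. \<forall>p::nat. p \<ge> 1 \<longrightarrow>
              norm (T_map Y k p X - X) \<le> CK / real p * norm (X - Xs) + CO / (real p)^2) \<and>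
           (\<forall>p::nat. p \<ge> 1 \<longrightarrow> norm (T_map Y k p Xs - Xs) \<le> CO / (real p)^2)"
proof -
  have hyps: "k \<ge> 1" "\<And>j. j \<in> {1..k} \<Longrightarrow> spd (Y j)" "compact KK" "KK \<subseteq> {A. spd A}" "KK \<noteq> {}"
    using assms by auto
  obtain CO where "CO \<ge> 0" and expansion: "\<And>X p. X \<in> KK \<Longrightarrow> p \<ge> 1 \<Longrightarrow>
      norm (T_map Y k p X - X - (1 / (real p * real k)) *\<^sub>R (\<Sum>j=1..k. geodesic_velocity (Y j) X))
        \<le> CO / (real p)\<^sup>2"
    using T_map_first_order_expansion[where Y = Y and KK = KK, OF hyps] by blast
  obtain L where "L \<ge> 0" and lip: "\<And>X X'. X \<in> KK \<Longrightarrow> X' \<in> KK \<Longrightarrow>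
      norm ((\<Sum>j=1..k. geodesic_velocity (Y j) X) - (\<Sum>j=1..k. geodesic_velocity (Y j) X'))
        \<le> L * norm (X - X')"
    using sum_geodesic_velocity_lipschitz[where Y = Y and KK = KK, OF hyps] by blast
  have stationary: "(\<Sum>j=1..k. geodesic_velocity (Y j) Xs) = 0"
    using assms(4) by (simp add: geodesic_velocity_def sum.distrib scaleR_sum_left)
  have main: "norm (T_map Y k p X - X) \<le> (L + 1) / real p * norm (X - Xs) + (CO + 1) / (real p)\<^sup>2"
    if X: "X \<in> KK" and p: "p \<ge> 1" for X p
  proof -
    let ?s = "1 / (real p * real k)" and ?V = "\<Sum>j=1..k. geodesic_velocity (Y j) X"
    have "norm (T_map Y k p X - X) \<le> norm (T_map Y k p X - X - ?s *\<^sub>R ?V) + ?s * norm ?V"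
      using norm_triangle_ineq[of "T_map Y k p X - X - ?s *\<^sub>R ?V" "?s *\<^sub>R ?V"] by simp
    also have "\<dots> \<le> CO / (real p)\<^sup>2 + 1 / real p * (L * norm (X - Xs))"
      using expansion[OF X p] lip[OF X assms(7)] stationary assms(1) p
      by (intro add_mono mult_mono) (auto simp: frac_le)
    also have "\<dots> \<le> (CO + 1) / (real p)\<^sup>2 + (L + 1) / real p * norm (X - Xs)"
    proof (rule add_mono)
      have "L * norm (X - Xs) \<le> (L + 1) * norm (X - Xs)"
        by (simp add: mult_right_mono)
      then show "1 / real p * (L * norm (X - Xs)) \<le> (L + 1) / real p * norm (X - Xs)"
        using p by (simp add: divide_right_mono)
    qed (simp add: divide_right_mono)
    finally show ?thesis by simp
  qed
  show ?thesis
  proof (intro exI conjI)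
    show "CO + 1 > 0" "L + 1 > 0"
      using \<open>CO \<ge> 0\<close> \<open>L \<ge> 0\<close> by auto
    show "\<forall>X\<in>KK. \<forall>p. 1 \<le> p \<longrightarrow> norm (T_map Y k p X - X) \<le> (L + 1) / real p * norm (X - Xs) + (CO + 1) / (real p)\<^sup>2"
      using main by blast
    show "\<forall>p. 1 \<le> p \<longrightarrow> norm (T_map Y k p Xs - Xs) \<le> (CO + 1) / (real p)\<^sup>2"
      using main[OF assms(7)] by simp
  qed
qed

end
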